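(* For any $\mathbf s\ge\mathbf0$ let $D(\mathbf s)=[\mathbf0,\mathbf s]=\{\mathbf t:\mathbf0\le\mathbf t\le\mathbf s\}$. For $1\le i\le m$ and any $\mathbf s\ge\mathbf0$, $$\sup_{\mathbf t\in D(\mathbf s)}\Big|\frac1{\tilde N^\nu_i}X^\nu_i(\mathbf t)-r_i(\mathbf t)\Big|\xrightarrow{p}0\quad\text{as }\nu\to\infty,$$ and thus $\sup_{\mathbf t\in D(\mathbf s)}|\mathbf X^\nu(\mathbf t)(N^\nu\Pi)^{-1}-\mathbf r(\mathbf t)|\xrightarrow{p}0$ as $\nu\to\infty$.
   Context: Fix $m\ge1$; vectors are row vectors, inequalities componentwise; $[x]$ is the integer part, sums over $1\le l\le x$ mean $1\le l\le[x]$; $|\cdot|$ the Euclidean norm. For each $\nu\ge1$: integers $N^\nu_i\ge1$, $N^\nu=\sum_iN^\nu_i$; constants $\pi_i>0$; $\pi^\nu_i=N^\nu_i/N^\nu$; $\Pi=\mathrm{diag}(\pi_1,\dots,\pi_m)$; $\tilde N^\nu_i=N^\nu\pi_i$; random vectors $\mathbf V^\nu_k\in[0,1]^m$; independent $\mathbf V^\nu_{(k,l)}\sim\mathbf V^\nu_k$ ($1\le k\le m$, $l\ge1$). Individuals $(i,j)$, $1\le j\le N^\nu_i$; conditionally on the $\mathbf V^\nu_{(k,l)}$, the events "infective $(k,l)$ contacts $(i,j)$" are independent with probabilities $V^\nu_{(k,l),i}$. For $\mathbf t\ge\mathbf0$, $\chi^\nu_{i,j}(\mathbf t)=1$ if $(i,j)$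 is contacted by some $(k,l)$ with $l\le t_k\tilde N^\nu_k$, else $0$; $X^\nu_i(\mathbf t)=\sum_{j=1}^{N^\nu_i}\chi^\nu_{i,j}(\mathbf t)$, $\mathbf X^\nu=(X^\nu_1,\dots,X^\nu_m)$. $\mu^\nu_{ik}=\mathbb E[V^\nu_{i,k}]$, $\lambda^\nu_{ikk}=\mathrm{var}(V^\nu_{i,k})$. Standing assumptions: as $\nu\to\infty$, $N^\nu\to\infty$, $\pi^\nu_i\to\pi_i$, and there are constants $\mu_{ik}\in[0,\infty)$ with $N^\nu\mu^\nu_{ik}\to\mu_{ik}$ and $N^\nu\lambda^\nu_{ikk}\to0$. $r_i(\mathbf t)=1-\exp(-\sum_{k=1}^mt_k\pi_k\mu_{ki})$, $\mathbf r=(r_1,\dots,r_m)$. *)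

theory Defs
  imports "HOL-Probability.Probability"
begin

text \<open>Types and components are indexed by 1..m. Vectors are functions
  nat \<Rightarrow> real, only the components in 1..m matter.
  V nu k l i : component i of the random vector V^nu_(k,l) (infective (k,l)).
  C nu k l i j : the event "infective (k,l) contacts individual (i,j)".\<close>

definition Ntot :: "nat \<Rightarrow> (nat \<Rightarrow> nat \<Rightarrow> nat) \<Rightarrow> nat \<Rightarrow> nat" where
  "Ntot m N nu = (\<Sum>i\<in>{1..m}. N nu i)"

definition Ntil :: "nat \<Rightarrow> (nat \<Rightarrow> nat \<Rightarrow> nat) \<Rightarrow> (nat \<Rightarrow> real) \<Rightarrow> nat \<Rightarrow> nat \<Rightarrow> real" where
  "Ntil m N \<pi> nu i = real (Ntot m N nu) * \<pi> i"

definition chi :: "nat \<Rightarrow> (nat \<Rightarrow> nat \<Rightarrow> nat) \<Rightarrow> (nat \<Rightarrow> real)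
    \<Rightarrow> (nat \<Rightarrow> nat \<Rightarrow> nat \<Rightarrow> nat \<Rightarrow> nat \<Rightarrow> 'a \<Rightarrow> bool)
    \<Rightarrow> nat \<Rightarrow> nat \<Rightarrow> nat \<Rightarrow> (nat \<Rightarrow> real) \<Rightarrow> 'a \<Rightarrow> bool" where
  "chi m N \<pi> C nu i j t \<omega> =
     (\<exists>k\<in>{1..m}. \<exists>l\<in>{1..nat \<lfloor>t k * Ntil m N \<pi> nu k\<rfloor>}. C nu k l i j \<omega>)"

definition Xcount :: "nat \<Rightarrow> (nat \<Rightarrow> nat \<Rightarrow> nat) \<Rightarrow> (nat \<Rightarrow> real)
    \<Rightarrow> (nat \<Rightarrow> nat \<Rightarrow> nat \<Rightarrow> nat \<Rightarrow> nat \<Rightarrow> 'a \<Rightarrow> bool)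
    \<Rightarrow> nat \<Rightarrow> nat \<Rightarrow> (nat \<Rightarrow> real) \<Rightarrow> 'a \<Rightarrow> real" where
  "Xcount m N \<pi> C nu i t \<omega> = real (card {j\<in>{1..N nu i}. chi m N \<pi> C nu i j t \<omega>})"

definition rfun :: "nat \<Rightarrow> (nat \<Rightarrow> real) \<Rightarrow> (nat \<Rightarrow> nat \<Rightarrow> real) \<Rightarrow> nat \<Rightarrow> (nat \<Rightarrow> real) \<Rightarrow> real" where
  "rfun m \<pi> \<mu> i t = 1 - exp (- (\<Sum>k\<in>{1..m}. t k * \<pi> k * \<mu> k i))"

definition Dbox :: "nat \<Rightarrow> (nat \<Rightarrow> real) \<Rightarrow> (nat \<Rightarrow> real) set" where
  "Dbox m s = {t. \<forall>k\<in>{1..m}. 0 \<le> t k \<and> t k \<le> s k}"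

definition Vvec :: "nat \<Rightarrow> (nat \<Rightarrow> nat \<Rightarrow> nat \<Rightarrow> nat \<Rightarrow> 'a \<Rightarrow> real) \<Rightarrow> nat \<Rightarrow> nat \<Rightarrow> nat \<Rightarrow> 'a \<Rightarrow> (nat \<Rightarrow> real)" where
  "Vvec m V nu k l \<omega> = restrict (\<lambda>i. V nu k l i \<omega>) {1..m}"

text \<open>The model for a fixed nu on the probability space Mnu:
  V in [0,1]^m, measurable; the vectors V_(k,l) are independent, and V_(k,l) has the
  same law as V_(k,1) (the law of V^nu_k); contact events are measurable and,
  conditionally on all V's, independent with probabilities V_(k,l),i. The conditional
  statement is expressed by its defining identity on the pi-system of finite
  intersections of events of the form {V_(k,l),i \<in> B}.\<close>
definition epidemic_model :: "nat \<Rightarrow> (nat \<Rightarrow> nat \<Rightarrow> nat) \<Rightarrow> 'a measure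
    \<Rightarrow> (nat \<Rightarrow> nat \<Rightarrow> nat \<Rightarrow> nat \<Rightarrow> 'a \<Rightarrow> real)
    \<Rightarrow> (nat \<Rightarrow> nat \<Rightarrow> nat \<Rightarrow> nat \<Rightarrow> nat \<Rightarrow> 'a \<Rightarrow> bool) \<Rightarrow> nat \<Rightarrow> bool" where
  "epidemic_model m N Mnu V C nu \<longleftrightarrow>
     prob_space Mnu \<and>
     (\<forall>k\<in>{1..m}. \<forall>l\<ge>1. \<forall>i\<in>{1..m}.
        V nu k l i \<in> borel_measurable Mnu \<and> (\<forall>\<omega>\<in>space Mnu. 0 \<le> V nu k l i \<omega> \<and> V nu k l i \<omega> \<le> 1)) \<and>
     prob_space.indep_vars Mnu (\<lambda>_. PiM {1..m} (\<lambda>_. borel))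
        (\<lambda>(k,l). Vvec m V nu k l) ({1..m} \<times> {1..}) \<and>
     (\<forall>k\<in>{1..m}. \<forall>l\<ge>1.
        distr Mnu (PiM {1..m} (\<lambda>_. borel)) (Vvec m V nu k l)
          = distr Mnu (PiM {1..m} (\<lambda>_. borel)) (Vvec m V nu k 1)) \<and>
     (\<forall>k\<in>{1..m}. \<forall>l\<ge>1. \<forall>i\<in>{1..m}. \<forall>j\<in>{1..N nu i}.
        {\<omega>\<in>space Mnu. C nu k l i j \<omega>} \<in> sets Mnu) \<and>
     (\<forall>F G B a.
        finite F \<longrightarrow> F \<subseteq> {(k,l,i,j). k\<in>{1..m} \<and> l \<ge> 1 \<and> i\<in>{1..m} \<and> j\<in>{1..N nu i}} \<longrightarrow>
        finite G \<longrightarrow> G \<subseteq> {(k,l,i). k\<in>{1..m} \<and> l \<ge> 1 \<and> i\<in>{1..m}} \<longrightarrow>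
        (\<forall>g\<in>G. B g \<in> sets borel) \<longrightarrow>
        measure Mnu {\<omega>\<in>space Mnu. (\<forall>(k,l,i)\<in>G. V nu k l i \<omega> \<in> B (k,l,i)) \<and>
                                   (\<forall>(k,l,i,j)\<in>F. C nu k l i j \<omega> = a (k,l,i,j))}
        = (\<integral>\<omega>. indicator {\<omega>\<in>space Mnu. \<forall>(k,l,i)\<in>G. V nu k l i \<omega> \<in> B (k,l,i)} \<omega> *
              (\<Prod>(k,l,i,j)\<in>F. if a (k,l,i,j) then V nu k l i \<omega> else 1 - V nu k l i \<omega>) \<partial>Mnu))"

definition conv_prob_zero :: "(nat \<Rightarrow> 'a measure) \<Rightarrow> (nat \<Rightarrow> 'a \<Rightarrow> real) \<Rightarrow> bool" where
  "conv_prob_zero M Y \<longleftrightarrow>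
     (\<forall>\<epsilon>>0. (\<forall>nu. {\<omega>\<in>space (M nu). \<epsilon> < \<bar>Y nu \<omega>\<bar>} \<in> sets (M nu)) \<and>
             (\<lambda>nu. measure (M nu) {\<omega>\<in>space (M nu). \<epsilon> < \<bar>Y nu \<omega>\<bar>}) \<longlonglongrightarrow> 0)"

end

theory Submission
  imports Defs
begin

text \<open>Fix \<open>t\<close> and write \<open>\<kappa>\<^sub>k = \<lfloor>t\<^sub>k N \<pi>\<^sub>k\<rfloor>\<close> for the number of type-\<open>k\<close> infectives active at \<open>t\<close>.
  Conditionally on the infectivity vectors the contacts are independent, so a given type-\<open>i\<close>
  individual escapes all infectives with probability \<open>q = \<Prod>\<^sub>k (1 - E V\<^sub>k\<^sub>i)\<^bsup>\<kappa>\<^sub>k\<^esup>\<close>, and two given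
  individuals both escape with probability \<open>q\<^sub>2 = \<Prod>\<^sub>k (E (1 - V\<^sub>k\<^sub>i)\<^sup>2)\<^bsup>\<kappa>\<^sub>k\<^esup>\<close>. Chebyshev's
  inequality for the number of escapers bounds the probability that \<open>X\<^sub>i(t)/N\<^sub>i\<close> deviates from
  \<open>1 - q\<close> by \<open>(1/N\<^sub>i + q\<^sub>2 - q\<^sup>2)/\<delta>\<^sup>2\<close>, and the hypotheses \<open>N E V \<longrightarrow> \<mu>\<close>, \<open>N var V \<longrightarrow> 0\<close> give
  \<open>q \<longrightarrow> exp (-\<Sum>\<^sub>k t\<^sub>k \<pi>\<^sub>k \<mu>\<^sub>k\<^sub>i) = 1 - r\<^sub>i(t)\<close> and \<open>q\<^sub>2 - q\<^sup>2 \<longrightarrow> 0\<close>. Since \<open>X\<^sub>i(t)\<close> and \<open>r\<^sub>i(t)\<close> are both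
  nondecreasing in \<open>t\<close> and \<open>r\<^sub>i\<close> is Lipschitz, the supremum over the box is controlled by finitely
  many grid points, which upgrades pointwise to uniform convergence in probability; the vector
  statement follows since the Euclidean norm is at most the sum of the components.\<close>

section \<open>Limits of real sequences\<close>

lemma tendsto_one_minus_power_exp:
  fixes a :: "nat \<Rightarrow> real" and n :: "nat \<Rightarrow> nat"
  assumes a_nonneg: "\<And>nu. 0 \<le> a nu" and a_zero: "a \<longlonglongrightarrow> 0"
    and na: "(\<lambda>nu. real (n nu) * a nu) \<longlonglongrightarrow> c"
  shows "(\<lambda>nu. (1 - a nu) ^ n nu) \<longlonglongrightarrow> exp (- c)"
proof -
  have small: "eventually (\<lambda>nu. a nu \<le> 1/2) sequentially"
    using order_tendstoD(2)[OF a_zero, of "1/2"] by (auto elim: eventually_mono)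
  have lower: "(\<lambda>nu. - (real (n nu) * a nu) - 2 * (real (n nu) * a nu) * a nu) \<longlonglongrightarrow> - c - 2 * c * 0"
    using na a_zero by (intro tendsto_intros)
  have "(\<lambda>nu. real (n nu) * ln (1 - a nu)) \<longlonglongrightarrow> - c"
  proof (rule tendsto_sandwich[OF _ _ _ tendsto_minus[OF na]])
    show "eventually (\<lambda>nu. - (real (n nu) * a nu) - 2 * (real (n nu) * a nu) * a nu
        \<le> real (n nu) * ln (1 - a nu)) sequentially"
      using small
    proof (rule eventually_mono)
      fix nu assume "a nu \<le> 1/2"
      then have "- a nu - 2 * (a nu)\<^sup>2 \<le> ln (1 - a nu)"
        by (rule ln_one_minus_pos_lower_bound[OF a_nonneg])
      then show "- (real (n nu) * a nu) - 2 * (real (n nu) * a nu) * a nu \<le> real (n nu) * ln (1 - a nu)"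
        using mult_left_mono[of _ _ "real (n nu)"] by (fastforce simp: algebra_simps power2_eq_square)
    qed
    show "eventually (\<lambda>nu. real (n nu) * ln (1 - a nu) \<le> - (real (n nu) * a nu)) sequentially"
      using small
    proof (rule eventually_mono)
      fix nu assume "a nu \<le> 1/2"
      then have "ln (1 - a nu) \<le> - a nu" using ln_le_minus_one[of "1 - a nu"] by simp
      then show "real (n nu) * ln (1 - a nu) \<le> - (real (n nu) * a nu)"
        using mult_left_mono[of _ _ "real (n nu)"] by fastforce
    qed
  qed (use lower in simp)
  then have "(\<lambda>nu. exp (real (n nu) * ln (1 - a nu))) \<longlonglongrightarrow> exp (- c)"
    by (rule tendsto_exp)
  then show ?thesis
    by (rule Lim_transform_eventually) (use small in \<open>auto elim!: eventually_mono simp: exp_of_nat_mult\<close>)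
qed

lemma tendsto_prod_one_minus_power_exp:
  fixes a :: "'k \<Rightarrow> nat \<Rightarrow> real" and n :: "'k \<Rightarrow> nat \<Rightarrow> nat"
  assumes "finite K"
    and "\<And>k nu. k \<in> K \<Longrightarrow> 0 \<le> a k nu" and "\<And>k. k \<in> K \<Longrightarrow> a k \<longlonglongrightarrow> 0"
    and "\<And>k. k \<in> K \<Longrightarrow> (\<lambda>nu. real (n k nu) * a k nu) \<longlonglongrightarrow> c k"
  shows "(\<lambda>nu. \<Prod>k\<in>K. (1 - a k nu) ^ n k nu) \<longlonglongrightarrow> exp (- (\<Sum>k\<in>K. c k))"
proof -
  have "(\<lambda>nu. \<Prod>k\<in>K. (1 - a k nu) ^ n k nu) \<longlonglongrightarrow> (\<Prod>k\<in>K. exp (- c k))"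
    using assms by (intro tendsto_prod tendsto_one_minus_power_exp) auto
  then show ?thesis
    using \<open>finite K\<close> by (simp add: exp_sum[symmetric] sum_negf)
qed

lemma tendsto_nat_floor_mult_div:
  fixes x :: "nat \<Rightarrow> real"
  assumes y: "0 \<le> y" and x: "filterlim x at_top sequentially"
  shows "(\<lambda>nu. real (nat \<lfloor>y * x nu\<rfloor>) / x nu) \<longlonglongrightarrow> y"
proof (rule tendsto_sandwich)
  have pos: "eventually (\<lambda>nu. 0 < x nu) sequentially"
    using x by (simp add: filterlim_at_top_dense)
  show "eventually (\<lambda>nu. y - 1 / x nu \<le> real (nat \<lfloor>y * x nu\<rfloor>) / x nu) sequentially"
    using pos
  proof (rule eventually_mono)
    fix nu assume pos: "0 < x nu"
    have "y - 1 / x nu = (y * x nu - 1) / x nu" using pos by (simp add: field_simps)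
    also have "\<dots> \<le> real (nat \<lfloor>y * x nu\<rfloor>) / x nu"
      using pos by (intro divide_right_mono) linarith+
    finally show "y - 1 / x nu \<le> real (nat \<lfloor>y * x nu\<rfloor>) / x nu" .
  qed
  show "eventually (\<lambda>nu. real (nat \<lfloor>y * x nu\<rfloor>) / x nu \<le> y) sequentially"
    using pos
  proof (rule eventually_mono)
    fix nu assume "0 < x nu"
    moreover from this have "real (nat \<lfloor>y * x nu\<rfloor>) \<le> y * x nu" using y by simp
    ultimately show "real (nat \<lfloor>y * x nu\<rfloor>) / x nu \<le> y" by (simp add: field_simps)
  qed
  show "(\<lambda>nu. y - 1 / x nu) \<longlonglongrightarrow> y"
    using tendsto_diff[OF tendsto_const tendsto_inverse_0_at_top[OF x], of y]
    by (simp add: inverse_eq_divide)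
qed (rule tendsto_const)

lemma exp_minus_diff_le:
  fixes a b :: real
  assumes "0 \<le> a" "a \<le> b"
  shows "exp (- a) - exp (- b) \<le> b - a"
proof -
  have "exp (- a) - exp (- b) = exp (- a) * (1 - exp (a - b))"
    by (simp add: exp_diff exp_minus field_simps)
  also have "\<dots> \<le> 1 * (b - a)"
  proof (rule mult_mono)
    show "1 - exp (a - b) \<le> b - a" using exp_ge_add_one_self[of "a - b"] by linarith
  qed (use assms in auto)
  finally show ?thesis by simp
qed

lemma nat_floor_divide_bracket:
  fixes h x :: real
  assumes "0 < h" "0 \<le> x"
  shows "h * nat \<lfloor>x / h\<rfloor> \<le> x" and "x \<le> h * (nat \<lfloor>x / h\<rfloor> + 1)"
proof -
  have "0 \<le> x / h" using assms by simp
  then have lower: "nat \<lfloor>x / h\<rfloor> \<le> x / h" and upper: "x / h \<le> nat \<lfloor>x / h\<rfloor> + 1"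
    by linarith+
  have "h * nat \<lfloor>x / h\<rfloor> \<le> h * (x / h)"
    using lower assms by (intro mult_left_mono) auto
  then show "h * nat \<lfloor>x / h\<rfloor> \<le> x" using assms by simp
  have "h * (x / h) \<le> h * (nat \<lfloor>x / h\<rfloor> + 1)"
    using upper assms by (intro mult_left_mono) auto
  then show "x \<le> h * (nat \<lfloor>x / h\<rfloor> + 1)" using assms by simp
qed

lemma abs_diff_le_between:
  fixes x0 x x1 r0 r r1 :: real
  assumes "x0 \<le> x" "x \<le> x1" "r0 \<le> r" "r \<le> r1"
  shows "\<bar>x - r\<bar> \<le> max \<bar>x0 - r0\<bar> \<bar>x1 - r1\<bar> + (r1 - r0)"
  using assms by (simp add: abs_le_iff max_def) linarith

lemma less_abs_cSUP_iff:
  fixes f :: "'b \<Rightarrow> real"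
  assumes "D \<noteq> {}" "bdd_above (f ` D)" "\<And>t. t \<in> D \<Longrightarrow> 0 \<le> f t"
  shows "\<epsilon> < \<bar>SUP t\<in>D. f t\<bar> \<longleftrightarrow> (\<exists>t\<in>D. \<epsilon> < f t)"
proof -
  have "0 \<le> (SUP t\<in>D. f t)"
    using assms by (metis all_not_in_conv cSUP_upper2)
  then show ?thesis
    using assms by (simp add: less_cSUP_iff)
qed

section \<open>Finite covers, indicator counts and Chebyshev\<close>

lemma tendsto_measure_finite_cover:
  assumes "\<And>nu. finite_measure (M nu)" and "finite I"
    and cover: "\<And>nu. A nu \<subseteq> (\<Union>i\<in>I. E nu i)"
    and sets: "\<And>nu i. i \<in> I \<Longrightarrow> E nu i \<in> sets (M nu)"
    and null: "\<And>i. i \<in> I \<Longrightarrow> (\<lambda>nu. measure (M nu) (E nu i)) \<longlonglongrightarrow> 0"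
  shows "(\<lambda>nu. measure (M nu) (A nu)) \<longlonglongrightarrow> 0"
proof (rule tendsto_sandwich[OF _ _ tendsto_const tendsto_null_sum[OF null]])
  show "\<forall>\<^sub>F nu in sequentially. measure (M nu) (A nu) \<le> (\<Sum>i\<in>I. measure (M nu) (E nu i))"
  proof (intro always_eventually allI)
    fix nu
    interpret finite_measure "M nu" by fact
    have "measure (M nu) (A nu) \<le> measure (M nu) (\<Union>i\<in>I. E nu i)"
      using cover sets \<open>finite I\<close> by (intro finite_measure_mono) auto
    also have "\<dots> \<le> (\<Sum>i\<in>I. measure (M nu) (E nu i))"
      using sets \<open>finite I\<close> by (intro measure_UNION_le)
    finally show "measure (M nu) (A nu) \<le> (\<Sum>i\<in>I. measure (M nu) (E nu i))" .
  qed
qed auto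

lemma sets_Collect_bex_finite_range:
  assumes "finite K" "finite R"
    and key: "\<And>t. t \<in> D \<Longrightarrow> key t \<in> K"
    and range: "\<And>\<kappa> \<omega>. \<kappa> \<in> K \<Longrightarrow> \<omega> \<in> space M \<Longrightarrow> \<Phi> \<kappa> \<omega> \<in> R"
    and level_sets: "\<And>\<kappa> x. \<kappa> \<in> K \<Longrightarrow> x \<in> R \<Longrightarrow> {\<omega>\<in>space M. \<Phi> \<kappa> \<omega> = x} \<in> sets M"
  shows "{\<omega>\<in>space M. \<exists>t\<in>D. P t (\<Phi> (key t) \<omega>)} \<in> sets M"
proof -
  define Q where "Q = {(\<kappa>, x) \<in> K \<times> R. \<exists>t\<in>D. key t = \<kappa> \<and> P t x}"
  have "{\<omega>\<in>space M. \<exists>t\<in>D. P t (\<Phi> (key t) \<omega>)} = (\<Union>(\<kappa>, x)\<in>Q. {\<omega>\<in>space M. \<Phi> \<kappa> \<omega> = x})"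
    unfolding Q_def using key range by fastforce
  also have "\<dots> \<in> sets M"
    using \<open>finite K\<close> \<open>finite R\<close> level_sets unfolding Q_def
    by (intro sets.finite_UN) (auto intro: finite_subset[of _ "K \<times> R"])
  finally show ?thesis .
qed

lemma (in prob_space) integrable_sum_indicator:
  assumes "\<And>j. j \<in> J \<Longrightarrow> A j \<in> events"
  shows "integrable M (\<lambda>\<omega>. \<Sum>j\<in>J. indicator (A j) \<omega> :: real)"
    and "integrable M (\<lambda>\<omega>. (\<Sum>j\<in>J. indicator (A j) \<omega> :: real)\<^sup>2)"
  using assms
  by (auto simp: power2_eq_square sum_product indicator_inter_arith[symmetric] emeasure_eq_measure)

lemma (in prob_space) expectation_sum_indicator:
  assumes "finite J" and "\<And>j. j \<in> J \<Longrightarrow> A j \<in> events"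
  shows "expectation (\<lambda>\<omega>. \<Sum>j\<in>J. indicator (A j) \<omega> :: real) = (\<Sum>j\<in>J. prob (A j))"
  using assms by (subst Bochner_Integration.integral_sum)
    (auto simp: Int_absorb2 sets.sets_into_space emeasure_eq_measure)

lemma (in prob_space) expectation_square_sum_indicator:
  assumes "finite J" and "\<And>j. j \<in> J \<Longrightarrow> A j \<in> events"
  shows "expectation (\<lambda>\<omega>. (\<Sum>j\<in>J. indicator (A j) \<omega> :: real)\<^sup>2) = (\<Sum>j\<in>J. \<Sum>j'\<in>J. prob (A j \<inter> A j'))"
proof -
  have "expectation (\<lambda>\<omega>. (\<Sum>j\<in>J. indicator (A j) \<omega> :: real)\<^sup>2)
      = expectation (\<lambda>\<omega>. \<Sum>j\<in>J. \<Sum>j'\<in>J. indicator (A j \<inter> A j') \<omega>)"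
    by (simp add: power2_eq_square sum_product indicator_inter_arith)
  also have "\<dots> = (\<Sum>j\<in>J. \<Sum>j'\<in>J. prob (A j \<inter> A j'))"
    using assms by (subst Bochner_Integration.integral_sum,
        auto simp: Int_absorb2 sets.sets_into_space emeasure_eq_measure)+
  finally show ?thesis .
qed

lemma (in prob_space) variance_sum_indicator_le:
  fixes A :: "'j \<Rightarrow> 'a set" and q q2 :: real
  assumes J: "finite J" "J \<noteq> {}" and A: "\<And>j. j \<in> J \<Longrightarrow> A j \<in> events"
    and q: "\<And>j. j \<in> J \<Longrightarrow> prob (A j) = q"
    and q2: "\<And>j j'. j \<in> J \<Longrightarrow> j' \<in> J \<Longrightarrow> j \<noteq> j' \<Longrightarrow> prob (A j \<inter> A j') = q2"
    and "0 \<le> q2"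
  shows "variance (\<lambda>\<omega>. \<Sum>j\<in>J. indicator (A j) \<omega> :: real) \<le> real (card J) + (real (card J))\<^sup>2 * (q2 - q\<^sup>2)"
proof -
  define n where "n = real (card J)"
  have n: "1 \<le> n" using J by (simp add: n_def Suc_leI card_gt_0_iff)
  have row: "(\<Sum>j'\<in>J. prob (A j \<inter> A j')) = q + (n - 1) * q2" if j: "j \<in> J" for j
  proof -
    have "(\<Sum>j'\<in>J - {j}. prob (A j \<inter> A j')) = (\<Sum>j'\<in>J - {j}. q2)"
      using j q2 by (intro sum.cong) auto
    then show ?thesis
      using j J q by (simp add: sum.remove[of J j] n_def of_nat_diff Suc_leI card_gt_0_iff)
  qed
  have "variance (\<lambda>\<omega>. \<Sum>j\<in>J. indicator (A j) \<omega> :: real)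
      = expectation (\<lambda>\<omega>. (\<Sum>j\<in>J. indicator (A j) \<omega>)\<^sup>2) - (expectation (\<lambda>\<omega>. \<Sum>j\<in>J. indicator (A j) \<omega>))\<^sup>2"
    using A by (intro variance_eq integrable_sum_indicator)
  also have "\<dots> = n * (q + (n - 1) * q2) - (n * q)\<^sup>2"
    using J(1) A q row by (simp add: expectation_sum_indicator expectation_square_sum_indicator n_def)
  also have "\<dots> \<le> n + n\<^sup>2 * (q2 - q\<^sup>2)"
  proof -
    have "n * q \<le> n" using n J q by (metis ex_in_conv mult_left_le order.trans zero_le_one prob_le_1)
    moreover have "n * (n - 1) * q2 \<le> n\<^sup>2 * q2"
      using n \<open>0 \<le> q2\<close> by (intro mult_right_mono) (auto simp: power2_eq_square algebra_simps)
    ultimately show ?thesis by (simp add: power2_eq_square algebra_simps)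
  qed
  finally show ?thesis by (simp add: n_def)
qed

lemma (in prob_space) prob_frequency_deviation_le:
  fixes A :: "'j \<Rightarrow> 'a set" and q q2 \<delta> :: real
  assumes J: "finite J" "J \<noteq> {}" and A: "\<And>j. j \<in> J \<Longrightarrow> A j \<in> events"
    and q: "\<And>j. j \<in> J \<Longrightarrow> prob (A j) = q"
    and q2: "\<And>j j'. j \<in> J \<Longrightarrow> j' \<in> J \<Longrightarrow> j \<noteq> j' \<Longrightarrow> prob (A j \<inter> A j') = q2"
    and "0 \<le> q2" and "0 < \<delta>"
  shows "prob {\<omega>\<in>space M. \<delta> \<le> \<bar>card {j\<in>J. \<omega> \<in> A j} / card J - q\<bar>}
    \<le> (1 / card J + (q2 - q\<^sup>2)) / \<delta>\<^sup>2"
proof -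
  define n where "n = real (card J)"
  define S where "S = (\<lambda>\<omega>. \<Sum>j\<in>J. indicator (A j) \<omega> :: real)"
  have n: "0 < n" using J by (simp add: n_def card_gt_0_iff)
  have ES: "expectation S = n * q"
    using J A q by (simp add: S_def expectation_sum_indicator n_def)
  have deviation_iff: "\<delta> \<le> \<bar>card {j\<in>J. \<omega> \<in> A j} / card J - q\<bar> \<longleftrightarrow> n * \<delta> \<le> \<bar>S \<omega> - expectation S\<bar>"
    for \<omega>
  proof -
    have "real (card {j\<in>J. \<omega> \<in> A j}) = S \<omega>"
      using J by (simp add: S_def indicator_def sum.If_cases Int_def)
    then have "card {j\<in>J. \<omega> \<in> A j} / card J - q = (S \<omega> - expectation S) / n"
      using n by (simp add: ES n_def field_simps)
    then show ?thesis using n by (simp add: abs_divide pos_le_divide_eq mult.commute)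
  qed
  have "prob {\<omega>\<in>space M. \<delta> \<le> \<bar>card {j\<in>J. \<omega> \<in> A j} / card J - q\<bar>}
      = prob {\<omega>\<in>space M. n * \<delta> \<le> \<bar>S \<omega> - expectation S\<bar>}"
    by (simp only: deviation_iff)
  also have "\<dots> \<le> variance S / (n * \<delta>)\<^sup>2"
    using A n \<open>0 < \<delta>\<close> unfolding S_def by (intro Chebyshev_inequality integrable_sum_indicator) auto
  also have "\<dots> \<le> (n + n\<^sup>2 * (q2 - q\<^sup>2)) / (n * \<delta>)\<^sup>2"
    unfolding S_def n_def using assms by (intro divide_right_mono variance_sum_indicator_le) auto
  also have "\<dots> = (1 / card J + (q2 - q\<^sup>2)) / \<delta>\<^sup>2"
    using n \<open>0 < \<delta>\<close> by (simp add: n_def field_simps power2_eq_square)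
  finally show ?thesis .
qed

lemma (in prob_space) unit_interval_moments:
  fixes X :: "'a \<Rightarrow> real"
  assumes [measurable]: "X \<in> borel_measurable M"
    and X: "\<And>\<omega>. \<omega> \<in> space M \<Longrightarrow> 0 \<le> X \<omega> \<and> X \<omega> \<le> 1"
  shows "expectation (\<lambda>\<omega>. 1 - X \<omega>) = 1 - expectation X"
    and "expectation (\<lambda>\<omega>. (1 - X \<omega>)\<^sup>2) = (1 - expectation X)\<^sup>2 + variance X"
    and "0 \<le> expectation X"
    and "expectation (\<lambda>\<omega>. (1 - X \<omega>)\<^sup>2) \<le> 1"
proof -
  have int: "integrable M X" and int2: "integrable M (\<lambda>\<omega>. (X \<omega>)\<^sup>2)"
    using X by (auto intro!: integrable_const_bound[where B=1] AE_I2 simp: abs_le_iff power_le_one)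
  show "expectation (\<lambda>\<omega>. 1 - X \<omega>) = 1 - expectation X"
    using int by (simp add: prob_space)
  have "expectation (\<lambda>\<omega>. (1 - X \<omega>)\<^sup>2) = expectation (\<lambda>\<omega>. 1 - 2 * X \<omega> + (X \<omega>)\<^sup>2)"
    by (simp add: power2_diff algebra_simps)
  also have "\<dots> = 1 - 2 * expectation X + expectation (\<lambda>\<omega>. (X \<omega>)\<^sup>2)"
    using int int2 by (simp add: prob_space)
  also have "\<dots> = (1 - expectation X)\<^sup>2 + variance X"
    using variance_eq[OF int int2] by (simp add: power2_diff)
  finally show "expectation (\<lambda>\<omega>. (1 - X \<omega>)\<^sup>2) = (1 - expectation X)\<^sup>2 + variance X" .
  show "0 \<le> expectation X"
    using X by (intro integral_nonneg_AE) (auto intro!: AE_I2)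
  have "expectation (\<lambda>\<omega>. (1 - X \<omega>)\<^sup>2) \<le> expectation (\<lambda>_. 1)"
    using X by (intro integral_mono_AE)
      (auto intro!: AE_I2 integrable_const_bound[where B=1] simp: abs_le_iff power_le_one)
  then show "expectation (\<lambda>\<omega>. (1 - X \<omega>)\<^sup>2) \<le> 1" by (simp add: prob_space)
qed

lemma conv_prob_zero_sum_bound:
  fixes Y :: "nat \<Rightarrow> 'a \<Rightarrow> real" and Z :: "'i \<Rightarrow> nat \<Rightarrow> 'a \<Rightarrow> real"
  assumes "\<And>nu. finite_measure (M nu)" and "finite I"
    and Z: "\<And>i. i \<in> I \<Longrightarrow> conv_prob_zero M (Z i)"
    and bound: "\<And>nu \<omega>. \<omega> \<in> space (M nu) \<Longrightarrow> \<bar>Y nu \<omega>\<bar> \<le> (\<Sum>i\<in>I. \<bar>Z i nu \<omega>\<bar>)"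
    and sets: "\<And>\<epsilon> nu. 0 < \<epsilon> \<Longrightarrow> {\<omega>\<in>space (M nu). \<epsilon> < \<bar>Y nu \<omega>\<bar>} \<in> sets (M nu)"
  shows "conv_prob_zero M Y"
  unfolding conv_prob_zero_def
proof (intro allI impI conjI)
  fix \<epsilon> :: real and nu assume "0 < \<epsilon>"
  then show "{\<omega>\<in>space (M nu). \<epsilon> < \<bar>Y nu \<omega>\<bar>} \<in> sets (M nu)"
    by (rule sets)
next
  fix \<epsilon> :: real assume "0 < \<epsilon>"
  define e where "e = \<epsilon> / (card I + 1)"
  have e: "0 < e" "card I * e \<le> \<epsilon>"
    using \<open>0 < \<epsilon>\<close> by (auto simp: e_def field_simps)
  show "(\<lambda>nu. measure (M nu) {\<omega>\<in>space (M nu). \<epsilon> < \<bar>Y nu \<omega>\<bar>}) \<longlonglongrightarrow> 0"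
  proof (rule tendsto_measure_finite_cover[OF assms(1,2)])
    show "{\<omega>\<in>space (M nu). \<epsilon> < \<bar>Y nu \<omega>\<bar>} \<subseteq> (\<Union>i\<in>I. {\<omega>\<in>space (M nu). e < \<bar>Z i nu \<omega>\<bar>})" for nu
    proof (rule subsetI, rule ccontr)
      fix \<omega> assume "\<omega> \<in> {\<omega>\<in>space (M nu). \<epsilon> < \<bar>Y nu \<omega>\<bar>}"
      then have \<omega>: "\<omega> \<in> space (M nu)" and "\<epsilon> < \<bar>Y nu \<omega>\<bar>" by auto
      moreover assume "\<omega> \<notin> (\<Union>i\<in>I. {\<omega>\<in>space (M nu). e < \<bar>Z i nu \<omega>\<bar>})"
      then have "(\<Sum>i\<in>I. \<bar>Z i nu \<omega>\<bar>) \<le> (\<Sum>i\<in>I. e)"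
        using \<omega> by (intro sum_mono) (auto simp: not_less)
      ultimately show False
        using bound[OF \<omega>] e by simp
    qed
  qed (use Z e in \<open>auto simp: conv_prob_zero_def\<close>)
qed

section \<open>The contact model for a fixed population\<close>

lemma epidemic_model_prob_space: "epidemic_model m N M V C nu \<Longrightarrow> prob_space M"
  unfolding epidemic_model_def by (elim conjE)

lemma epidemic_model_V_measurable:
  "epidemic_model m N M V C nu \<Longrightarrow> k \<in> {1..m} \<Longrightarrow> 1 \<le> l \<Longrightarrow> i \<in> {1..m}
    \<Longrightarrow> V nu k l i \<in> borel_measurable M"
  unfolding epidemic_model_def by (elim conjE) blast

lemma epidemic_model_V_bounds:
  "epidemic_model m N M V C nu \<Longrightarrow> k \<in> {1..m} \<Longrightarrow> 1 \<le> l \<Longrightarrow> i \<in> {1..m} \<Longrightarrow> \<omega> \<in> space M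
    \<Longrightarrow> 0 \<le> V nu k l i \<omega> \<and> V nu k l i \<omega> \<le> 1"
  unfolding epidemic_model_def by (elim conjE) blast

lemma epidemic_model_indep_vars:
  "epidemic_model m N M V C nu \<Longrightarrow>
    prob_space.indep_vars M (\<lambda>_. PiM {1..m} (\<lambda>_. borel)) (\<lambda>(k, l). Vvec m V nu k l) ({1..m} \<times> {1..})"
  unfolding epidemic_model_def by (elim conjE)

lemma epidemic_model_distr_eq:
  "epidemic_model m N M V C nu \<Longrightarrow> k \<in> {1..m} \<Longrightarrow> 1 \<le> l
    \<Longrightarrow> distr M (PiM {1..m} (\<lambda>_. borel)) (Vvec m V nu k l) = distr M (PiM {1..m} (\<lambda>_. borel)) (Vvec m V nu k 1)"
  unfolding epidemic_model_def by (elim conjE) blast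

lemma epidemic_model_contact_sets:
  "epidemic_model m N M V C nu \<Longrightarrow> k \<in> {1..m} \<Longrightarrow> 1 \<le> l \<Longrightarrow> i \<in> {1..m} \<Longrightarrow> j \<in> {1..N nu i}
    \<Longrightarrow> {\<omega>\<in>space M. C nu k l i j \<omega>} \<in> sets M"
  unfolding epidemic_model_def by (elim conjE) blast

lemma epidemic_model_contact_prob:
  assumes model: "epidemic_model m N M V C nu" and "finite F"
    and F: "F \<subseteq> {(k, l, i, j). k \<in> {1..m} \<and> 1 \<le> l \<and> i \<in> {1..m} \<and> j \<in> {1..N nu i}}"
  shows "measure M {\<omega>\<in>space M. \<forall>(k, l, i, j)\<in>F. C nu k l i j \<omega> = a (k, l, i, j)}
    = (\<integral>\<omega>. (\<Prod>(k, l, i, j)\<in>F. if a (k, l, i, j) then V nu k l i \<omega> else 1 - V nu k l i \<omega>) \<partial>M)"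
proof -
  let ?P = "\<lambda>\<omega>. \<Prod>(k, l, i, j)\<in>F. if a (k, l, i, j) then V nu k l i \<omega> else 1 - V nu k l i \<omega>"
  have "measure M {\<omega>\<in>space M. (\<forall>(k, l, i)\<in>{}. V nu k l i \<omega> \<in> UNIV)
      \<and> (\<forall>(k, l, i, j)\<in>F. C nu k l i j \<omega> = a (k, l, i, j))}
    = (\<integral>\<omega>. indicator {\<omega>\<in>space M. \<forall>(k, l, i)\<in>{}. V nu k l i \<omega> \<in> UNIV} \<omega> * ?P \<omega> \<partial>M)"
    using model[unfolded epidemic_model_def, THEN conjunct2, THEN conjunct2, THEN conjunct2,
        THEN conjunct2, THEN conjunct2, rule_format, of F "{}" "\<lambda>_. UNIV" a] \<open>finite F\<close> F
    by simp
  also have "\<dots> = (\<integral>\<omega>. ?P \<omega> \<partial>M)"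
    by (intro Bochner_Integration.integral_cong) auto
  finally show ?thesis by simp
qed

lemma epidemic_model_integral_V_eq:
  assumes model: "epidemic_model m N M V C nu" and k: "k \<in> {1..m}" and l: "1 \<le> l"
    and i: "i \<in> {1..m}" and g: "(g :: real \<Rightarrow> real) \<in> borel_measurable borel"
  shows "(\<integral>\<omega>. g (V nu k l i \<omega>) \<partial>M) = (\<integral>\<omega>. g (V nu k 1 i \<omega>) \<partial>M)"
proof -
  have g_coord [measurable]: "(\<lambda>v. g (v i)) \<in> borel_measurable (PiM {1..m} (\<lambda>_. borel))"
    using i g by measurable
  have Vvec [measurable]: "Vvec m V nu k l' \<in> measurable M (PiM {1..m} (\<lambda>_. borel))" if "1 \<le> l'" for l'
    unfolding Vvec_def using epidemic_model_V_measurable[OF model k that]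
    by (intro measurable_restrict) auto
  have "(\<integral>\<omega>. g (V nu k l' i \<omega>) \<partial>M)
      = integral\<^sup>L (distr M (PiM {1..m} (\<lambda>_. borel)) (Vvec m V nu k l')) (\<lambda>v. g (v i))" if "1 \<le> l'" for l'
    using i by (subst integral_distr[OF Vvec[OF that] g_coord]) (simp add: Vvec_def)
  then show ?thesis
    using epidemic_model_distr_eq[OF model k l] l by simp
qed

lemma epidemic_model_integral_prod_infectives:
  fixes h :: "real \<Rightarrow> real"
  assumes model: "epidemic_model m N M V C nu" and i: "i \<in> {1..m}"
    and h: "h \<in> borel_measurable borel" and h_bound: "\<And>x. 0 \<le> x \<Longrightarrow> x \<le> 1 \<Longrightarrow> \<bar>h x\<bar> \<le> 1"
  shows "(\<integral>\<omega>. (\<Prod>(k, l)\<in>Sigma {1..m} (\<lambda>k. {1..\<kappa> k}). h (V nu k l i \<omega>)) \<partial>M)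
    = (\<Prod>k\<in>{1..m}. (\<integral>\<omega>. h (V nu k 1 i \<omega>) \<partial>M) ^ \<kappa> k)"
proof -
  interpret prob_space M using model by (rule epidemic_model_prob_space)
  have [measurable]: "(\<lambda>v. h (v i)) \<in> borel_measurable (PiM {1..m} (\<lambda>_. borel))"
    using i h by measurable
  define S where "S = Sigma {1..m} (\<lambda>k. {1..\<kappa> k})"
  have S: "finite S" "S \<subseteq> {1..m} \<times> {1..}" unfolding S_def by auto
  have "indep_vars (\<lambda>_. borel) (\<lambda>kl. (\<lambda>v. h (v i)) \<circ> (\<lambda>(k, l). Vvec m V nu k l) kl) ({1..m} \<times> {1..})"
    by (intro indep_vars_compose[OF epidemic_model_indep_vars[OF model]]) measurable
  then have "indep_vars (\<lambda>_. borel) (\<lambda>kl. (\<lambda>v. h (v i)) \<circ> (\<lambda>(k, l). Vvec m V nu k l) kl) S"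
    using S(2) by (rule indep_vars_subset)
  moreover have "(\<lambda>kl. (\<lambda>v. h (v i)) \<circ> (\<lambda>(k, l). Vvec m V nu k l) kl) = (\<lambda>(k, l) \<omega>. h (V nu k l i \<omega>))"
    using i by (auto simp: Vvec_def fun_eq_iff)
  ultimately have indep: "indep_vars (\<lambda>_. borel) (\<lambda>(k, l) \<omega>. h (V nu k l i \<omega>)) S"
    by simp
  have integrable: "integrable M (\<lambda>\<omega>. h (V nu k l i \<omega>))" if "(k, l) \<in> S" for k l
    using that epidemic_model_V_measurable[OF model _ _ i] epidemic_model_V_bounds[OF model _ _ i] h_bound h
    by (intro integrable_const_bound[where B=1]) (auto simp: S_def intro!: AE_I2)
  have "(\<integral>\<omega>. (\<Prod>(k, l)\<in>S. h (V nu k l i \<omega>)) \<partial>M) = (\<Prod>(k, l)\<in>S. \<integral>\<omega>. h (V nu k l i \<omega>) \<partial>M)"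
    using indep_vars_lebesgue_integral[OF S(1) indep] integrable by (simp add: case_prod_beta')
  also have "\<dots> = (\<Prod>(k, l)\<in>S. \<integral>\<omega>. h (V nu k 1 i \<omega>) \<partial>M)"
  proof (intro prod.cong refl)
    fix kl assume "kl \<in> S"
    then obtain k l where kl: "kl = (k, l)" "k \<in> {1..m}" "1 \<le> l" by (auto simp: S_def)
    then show "(case kl of (k, l) \<Rightarrow> \<integral>\<omega>. h (V nu k l i \<omega>) \<partial>M) = (case kl of (k, l) \<Rightarrow> \<integral>\<omega>. h (V nu k 1 i \<omega>) \<partial>M)"
      using epidemic_model_integral_V_eq[OF model kl(2,3) i h] by simp
  qed
  also have "\<dots> = (\<Prod>k\<in>{1..m}. (\<integral>\<omega>. h (V nu k 1 i \<omega>) \<partial>M) ^ \<kappa> k)"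
    unfolding S_def by (subst prod.Sigma[symmetric]) auto
  finally show ?thesis unfolding S_def .
qed

definition contacted_count :: "nat \<Rightarrow> (nat \<Rightarrow> nat \<Rightarrow> nat)
    \<Rightarrow> (nat \<Rightarrow> nat \<Rightarrow> nat \<Rightarrow> nat \<Rightarrow> nat \<Rightarrow> 'a \<Rightarrow> bool) \<Rightarrow> nat \<Rightarrow> nat \<Rightarrow> (nat \<Rightarrow> nat) \<Rightarrow> 'a \<Rightarrow> nat" where
  "contacted_count m N C nu i \<kappa> \<omega> = card {j\<in>{1..N nu i}. \<exists>k\<in>{1..m}. \<exists>l\<in>{1..\<kappa> k}. C nu k l i j \<omega>}"

lemma contacted_count_le: "contacted_count m N C nu i \<kappa> \<omega> \<le> N nu i"
proof -
  have "contacted_count m N C nu i \<kappa> \<omega> \<le> card {1..N nu i}"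
    unfolding contacted_count_def by (rule card_mono) auto
  then show ?thesis by simp
qed

lemma contacted_count_mono:
  "(\<And>k. k \<in> {1..m} \<Longrightarrow> \<kappa> k \<le> \<kappa>' k) \<Longrightarrow> contacted_count m N C nu i \<kappa> \<omega> \<le> contacted_count m N C nu i \<kappa>' \<omega>"
  unfolding contacted_count_def by (rule card_mono) (auto, meson atLeastAtMost_iff le_trans)

lemma epidemic_model_contacted_sets:
  assumes model: "epidemic_model m N M V C nu" and i: "i \<in> {1..m}" and j: "j \<in> {1..N nu i}"
  shows "{\<omega>\<in>space M. \<exists>k\<in>{1..m}. \<exists>l\<in>{1..\<kappa> k}. C nu k l i j \<omega>} \<in> sets M"
proof -
  have "{\<omega>\<in>space M. \<exists>k\<in>{1..m}. \<exists>l\<in>{1..\<kappa> k}. C nu k l i j \<omega>}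
      = (\<Union>k\<in>{1..m}. \<Union>l\<in>{1..\<kappa> k}. {\<omega>\<in>space M. C nu k l i j \<omega>})"
    by auto
  then show ?thesis
    using epidemic_model_contact_sets[OF model _ _ i j] by auto
qed

lemma contacted_count_measurable:
  assumes model: "epidemic_model m N M V C nu" and i: "i \<in> {1..m}"
  shows "(\<lambda>\<omega>. real (contacted_count m N C nu i \<kappa> \<omega>)) \<in> borel_measurable M"
proof -
  define A where "A j = {\<omega>\<in>space M. \<exists>k\<in>{1..m}. \<exists>l\<in>{1..\<kappa> k}. C nu k l i j \<omega>}" for j
  have "(\<lambda>\<omega>. \<Sum>j\<in>{1..N nu i}. indicator (A j) \<omega> :: real) \<in> borel_measurable M"
    using epidemic_model_contacted_sets[OF model i] by (auto simp: A_def)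
  moreover have "(\<Sum>j\<in>{1..N nu i}. indicator (A j) \<omega> :: real) = real (contacted_count m N C nu i \<kappa> \<omega>)"
    if "\<omega> \<in> space M" for \<omega>
    using that by (simp add: contacted_count_def A_def indicator_def sum.If_cases Int_def)
  ultimately show ?thesis
    by (simp cong: measurable_cong)
qed

lemma measure_uncontacted:
  assumes model: "epidemic_model m N M V C nu" and i: "i \<in> {1..m}" and J: "J \<subseteq> {1..N nu i}"
  shows "measure M {\<omega>\<in>space M. \<forall>j\<in>J. \<forall>k\<in>{1..m}. \<forall>l\<in>{1..\<kappa> k}. \<not> C nu k l i j \<omega>}
    = (\<Prod>k\<in>{1..m}. (\<integral>\<omega>. (1 - V nu k 1 i \<omega>) ^ card J \<partial>M) ^ \<kappa> k)"
proof -
  define S where "S = Sigma {1..m} (\<lambda>k. {1..\<kappa> k})"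
  define F where "F = (\<lambda>((k, l), j). (k, l, i, j)) ` (S \<times> J)"
  have inj: "inj_on (\<lambda>((k, l), j). (k, l, i, j)) (S \<times> J)"
    by (auto simp: inj_on_def)
  have J_finite: "finite J" using J finite_subset by blast
  have F: "finite F" "F \<subseteq> {(k, l, i, j). k \<in> {1..m} \<and> 1 \<le> l \<and> i \<in> {1..m} \<and> j \<in> {1..N nu i}}"
    using i J J_finite by (auto simp: F_def S_def)
  have "{\<omega>\<in>space M. \<forall>j\<in>J. \<forall>k\<in>{1..m}. \<forall>l\<in>{1..\<kappa> k}. \<not> C nu k l i j \<omega>}
      = {\<omega>\<in>space M. \<forall>(k, l, i, j)\<in>F. C nu k l i j \<omega> = False}"
    by (auto simp: F_def S_def)
  then have "measure M {\<omega>\<in>space M. \<forall>j\<in>J. \<forall>k\<in>{1..m}. \<forall>l\<in>{1..\<kappa> k}. \<not> C nu k l i j \<omega>}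
      = (\<integral>\<omega>. (\<Prod>(k, l, i, j)\<in>F. 1 - V nu k l i \<omega>) \<partial>M)"
    using epidemic_model_contact_prob[OF model F, of "\<lambda>_. False"] by simp
  also have "\<dots> = (\<integral>\<omega>. (\<Prod>(k, l)\<in>S. (1 - V nu k l i \<omega>) ^ card J) \<partial>M)"
  proof (intro Bochner_Integration.integral_cong refl)
    fix \<omega>
    show "(\<Prod>(k, l, i, j)\<in>F. 1 - V nu k l i \<omega>) = (\<Prod>(k, l)\<in>S. (1 - V nu k l i \<omega>) ^ card J)"
      unfolding F_def prod.reindex[OF inj]
      using prod.cartesian_product[where g="\<lambda>(k, l) j. 1 - V nu k l i \<omega>" and A=S and B=J]
      by (simp add: split_def comp_def)
  qed
  also have "\<dots> = (\<Prod>k\<in>{1..m}. (\<integral>\<omega>. (1 - V nu k 1 i \<omega>) ^ card J \<partial>M) ^ \<kappa> k)"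
    unfolding S_def using model i
    by (rule epidemic_model_integral_prod_infectives) (auto simp: abs_le_iff power_le_one)
  finally show ?thesis .
qed

definition uncontacted :: "nat \<Rightarrow> 'a measure \<Rightarrow> (nat \<Rightarrow> nat \<Rightarrow> nat \<Rightarrow> nat \<Rightarrow> nat \<Rightarrow> 'a \<Rightarrow> bool)
    \<Rightarrow> nat \<Rightarrow> nat \<Rightarrow> (nat \<Rightarrow> nat) \<Rightarrow> nat \<Rightarrow> 'a set" where
  "uncontacted m M C nu i \<kappa> j = {\<omega>\<in>space M. \<forall>k\<in>{1..m}. \<forall>l\<in>{1..\<kappa> k}. \<not> C nu k l i j \<omega>}"

lemma uncontacted_sets:
  assumes "epidemic_model m N M V C nu" and "i \<in> {1..m}" and "j \<in> {1..N nu i}"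
  shows "uncontacted m M C nu i \<kappa> j \<in> sets M"
proof -
  have "uncontacted m M C nu i \<kappa> j = space M - {\<omega>\<in>space M. \<exists>k\<in>{1..m}. \<exists>l\<in>{1..\<kappa> k}. C nu k l i j \<omega>}"
    by (auto simp: uncontacted_def)
  then show ?thesis using epidemic_model_contacted_sets[OF assms] by auto
qed

lemma card_uncontacted:
  assumes "\<omega> \<in> space M"
  shows "card {j\<in>{1..N nu i}. \<omega> \<in> uncontacted m M C nu i \<kappa> j} = N nu i - contacted_count m N C nu i \<kappa> \<omega>"
proof -
  have "card {j\<in>{1..N nu i}. \<omega> \<in> uncontacted m M C nu i \<kappa> j}
      = card ({1..N nu i} - {j\<in>{1..N nu i}. \<exists>k\<in>{1..m}. \<exists>l\<in>{1..\<kappa> k}. C nu k l i j \<omega>})"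
    using assms by (intro arg_cong[where f = card]) (auto simp: uncontacted_def)
  also have "\<dots> = card {1..N nu i} - contacted_count m N C nu i \<kappa> \<omega>"
    unfolding contacted_count_def by (rule card_Diff_subset) auto
  finally show ?thesis by simp
qed

lemma measure_uncontacted_one:
  assumes "epidemic_model m N M V C nu" and "i \<in> {1..m}" and "j \<in> {1..N nu i}"
  shows "measure M (uncontacted m M C nu i \<kappa> j) = (\<Prod>k\<in>{1..m}. (\<integral>\<omega>. 1 - V nu k 1 i \<omega> \<partial>M) ^ \<kappa> k)"
  using measure_uncontacted[OF assms(1,2), of "{j}" \<kappa>] assms(3) by (simp add: uncontacted_def)

lemma measure_uncontacted_two:
  assumes "epidemic_model m N M V C nu" and "i \<in> {1..m}"
    and "j \<in> {1..N nu i}" "j' \<in> {1..N nu i}" "j \<noteq> j'"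
  shows "measure M (uncontacted m M C nu i \<kappa> j \<inter> uncontacted m M C nu i \<kappa> j')
    = (\<Prod>k\<in>{1..m}. (\<integral>\<omega>. (1 - V nu k 1 i \<omega>)\<^sup>2 \<partial>M) ^ \<kappa> k)"
proof -
  have "uncontacted m M C nu i \<kappa> j \<inter> uncontacted m M C nu i \<kappa> j'
      = {\<omega>\<in>space M. \<forall>j''\<in>{j, j'}. \<forall>k\<in>{1..m}. \<forall>l\<in>{1..\<kappa> k}. \<not> C nu k l i j'' \<omega>}"
    by (auto simp: uncontacted_def)
  then show ?thesis
    using measure_uncontacted[OF assms(1,2), of "{j, j'}" \<kappa>] assms(3-5) by (simp add: power2_eq_square)
qed

lemma prob_contacted_count_deviation_le:
  fixes \<kappa> :: "nat \<Rightarrow> nat"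
  assumes model: "epidemic_model m N M V C nu" and i: "i \<in> {1..m}"
    and N_pos: "1 \<le> N nu i" and "0 < \<delta>"
  defines "q \<equiv> \<Prod>k\<in>{1..m}. (\<integral>\<omega>. 1 - V nu k 1 i \<omega> \<partial>M) ^ \<kappa> k"
    and "q2 \<equiv> \<Prod>k\<in>{1..m}. (\<integral>\<omega>. (1 - V nu k 1 i \<omega>)\<^sup>2 \<partial>M) ^ \<kappa> k"
  shows "measure M {\<omega>\<in>space M. \<delta> \<le> \<bar>contacted_count m N C nu i \<kappa> \<omega> / N nu i - (1 - q)\<bar>}
    \<le> (1 / N nu i + (q2 - q\<^sup>2)) / \<delta>\<^sup>2"
proof -
  interpret prob_space M using model by (rule epidemic_model_prob_space)
  let ?U = "uncontacted m M C nu i \<kappa>"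
  have "prob (?U j) = q" if "j \<in> {1..N nu i}" for j
    unfolding q_def using model i that by (rule measure_uncontacted_one)
  moreover have "prob (?U j \<inter> ?U j') = q2" if "j \<in> {1..N nu i}" "j' \<in> {1..N nu i}" "j \<noteq> j'" for j j'
    unfolding q2_def using model i that by (rule measure_uncontacted_two)
  moreover have "0 \<le> q2"
    unfolding q2_def by (intro prod_nonneg zero_le_power integral_nonneg_AE) auto
  ultimately have "prob {\<omega>\<in>space M. \<delta> \<le> \<bar>card {j\<in>{1..N nu i}. \<omega> \<in> ?U j} / card {1..N nu i} - q\<bar>}
      \<le> (1 / card {1..N nu i} + (q2 - q\<^sup>2)) / \<delta>\<^sup>2"
    using N_pos uncontacted_sets[OF model i] \<open>0 < \<delta>\<close>
    by (intro prob_frequency_deviation_le) auto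
  also have "{\<omega>\<in>space M. \<delta> \<le> \<bar>card {j\<in>{1..N nu i}. \<omega> \<in> ?U j} / card {1..N nu i} - q\<bar>}
      = {\<omega>\<in>space M. \<delta> \<le> \<bar>contacted_count m N C nu i \<kappa> \<omega> / N nu i - (1 - q)\<bar>}"
  proof (intro Collect_cong conj_cong refl)
    fix \<omega> assume "\<omega> \<in> space M"
    then have "real (card {j\<in>{1..N nu i}. \<omega> \<in> ?U j}) = N nu i - contacted_count m N C nu i \<kappa> \<omega>"
      using card_uncontacted contacted_count_le by (simp add: of_nat_diff)
    then have "card {j\<in>{1..N nu i}. \<omega> \<in> ?U j} / card {1..N nu i} - q
        = - (contacted_count m N C nu i \<kappa> \<omega> / N nu i - (1 - q))"
      using N_pos contacted_count_le[of m N C nu i \<kappa> \<omega>] by (simp add: of_nat_diff diff_divide_distrib)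
    then show "\<delta> \<le> \<bar>card {j\<in>{1..N nu i}. \<omega> \<in> ?U j} / card {1..N nu i} - q\<bar>
        \<longleftrightarrow> \<delta> \<le> \<bar>contacted_count m N C nu i \<kappa> \<omega> / N nu i - (1 - q)\<bar>"
      by (simp only: abs_minus_cancel)
  qed
  finally show ?thesis by simp
qed

section \<open>The large-population limit\<close>

locale epidemic_limit =
  fixes m :: nat and N :: "nat \<Rightarrow> nat \<Rightarrow> nat" and \<pi> :: "nat \<Rightarrow> real"
    and M :: "nat \<Rightarrow> 'a measure"
    and V :: "nat \<Rightarrow> nat \<Rightarrow> nat \<Rightarrow> nat \<Rightarrow> 'a \<Rightarrow> real"
    and C :: "nat \<Rightarrow> nat \<Rightarrow> nat \<Rightarrow> nat \<Rightarrow> nat \<Rightarrow> 'a \<Rightarrow> bool"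
    and \<mu> :: "nat \<Rightarrow> nat \<Rightarrow> real"
  assumes m: "m \<ge> 1"
    and N_pos: "\<And>nu i. i \<in> {1..m} \<Longrightarrow> N nu i \<ge> 1"
    and pi_pos: "\<And>i. i \<in> {1..m} \<Longrightarrow> \<pi> i > 0"
    and model: "\<And>nu. epidemic_model m N (M nu) V C nu"
    and N_inf: "filterlim (\<lambda>nu. Ntot m N nu) at_top sequentially"
    and pi_lim: "\<And>i. i \<in> {1..m} \<Longrightarrow> (\<lambda>nu. real (N nu i) / real (Ntot m N nu)) \<longlonglongrightarrow> \<pi> i"
    and mu_nonneg: "\<And>i k. i \<in> {1..m} \<Longrightarrow> k \<in> {1..m} \<Longrightarrow> \<mu> i k \<ge> 0"
    and mu_lim: "\<And>i k. i \<in> {1..m} \<Longrightarrow> k \<in> {1..m} \<Longrightarrow>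
       (\<lambda>nu. real (Ntot m N nu) * prob_space.expectation (M nu) (V nu i 1 k)) \<longlonglongrightarrow> \<mu> i k"
    and var_lim: "\<And>i k. i \<in> {1..m} \<Longrightarrow> k \<in> {1..m} \<Longrightarrow>
       (\<lambda>nu. real (Ntot m N nu) * prob_space.variance (M nu) (V nu i 1 k)) \<longlonglongrightarrow> 0"
begin

lemma Ntot_pos [simp]: "0 < Ntot m N nu" "Ntot m N nu \<noteq> 0"
proof -
  have "N nu 1 \<le> Ntot m N nu"
    unfolding Ntot_def using m by (intro member_le_sum) auto
  then show "0 < Ntot m N nu" "Ntot m N nu \<noteq> 0" using N_pos[of 1 nu] m by simp_all
qed

lemma Ntil_pos: "i \<in> {1..m} \<Longrightarrow> 0 < Ntil m N \<pi> nu i"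
  unfolding Ntil_def using pi_pos by (simp add: zero_less_mult_iff)

lemma Ntot_tendsto: "filterlim (\<lambda>nu. real (Ntot m N nu)) at_top sequentially"
  by (rule filterlim_compose[OF filterlim_real_sequentially N_inf])

lemma tendsto_0_if_Ntot_mult_tendsto:
  assumes "(\<lambda>nu. real (Ntot m N nu) * f nu) \<longlonglongrightarrow> L"
  shows "f \<longlonglongrightarrow> 0"
proof -
  have "(\<lambda>nu. (real (Ntot m N nu) * f nu) * inverse (real (Ntot m N nu))) \<longlonglongrightarrow> L * 0"
    by (intro tendsto_mult assms tendsto_inverse_0_at_top Ntot_tendsto)
  then show ?thesis
    by (simp add: field_simps)
qed

lemma inverse_N_tendsto_0: "i \<in> {1..m} \<Longrightarrow> (\<lambda>nu. 1 / real (N nu i)) \<longlonglongrightarrow> 0"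
  using tendsto_0_if_Ntot_mult_tendsto[of "\<lambda>nu. 1 / real (N nu i)" "1 / \<pi> i"]
    tendsto_divide[OF tendsto_const pi_lim, of i 1] pi_pos[of i]
  by (simp add: field_simps)

lemma N_div_Ntil_tendsto_1: "i \<in> {1..m} \<Longrightarrow> (\<lambda>nu. real (N nu i) / Ntil m N \<pi> nu i) \<longlonglongrightarrow> 1"
  using tendsto_divide[OF pi_lim tendsto_const, of i "\<pi> i"] pi_pos[of i]
  by (simp add: Ntil_def field_simps)

definition infectives_at :: "(nat \<Rightarrow> real) \<Rightarrow> nat \<Rightarrow> nat \<Rightarrow> nat" where
  "infectives_at t nu = (\<lambda>k\<in>{1..m}. nat \<lfloor>t k * Ntil m N \<pi> nu k\<rfloor>)"

lemma Xcount_eq_contacted_count: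
  "Xcount m N \<pi> C nu i t \<omega> = real (contacted_count m N C nu i (infectives_at t nu) \<omega>)"
  unfolding Xcount_def chi_def contacted_count_def infectives_at_def by simp

definition deviation :: "nat \<Rightarrow> nat \<Rightarrow> (nat \<Rightarrow> real) \<Rightarrow> 'a \<Rightarrow> real" where
  "deviation i nu t \<omega> = \<bar>Xcount m N \<pi> C nu i t \<omega> / Ntil m N \<pi> nu i - rfun m \<pi> \<mu> i t\<bar>"

definition deviation_norm :: "nat \<Rightarrow> (nat \<Rightarrow> real) \<Rightarrow> 'a \<Rightarrow> real" where
  "deviation_norm nu t \<omega> =
    sqrt (\<Sum>i\<in>{1..m}. (Xcount m N \<pi> C nu i t \<omega> / (real (Ntot m N nu) * \<pi> i) - rfun m \<pi> \<mu> i t)\<^sup>2)"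

lemma deviation_measurable [measurable]:
  "i \<in> {1..m} \<Longrightarrow> deviation i nu t \<in> borel_measurable (M nu)"
  using contacted_count_measurable[OF model]
  by (simp add: deviation_def[abs_def] Xcount_eq_contacted_count)

lemma infectives_at_mono:
  "k \<in> {1..m} \<Longrightarrow> t k \<le> t' k \<Longrightarrow> infectives_at t nu k \<le> infectives_at t' nu k"
  unfolding infectives_at_def using Ntil_pos[of k nu]
  by (auto intro!: nat_mono floor_mono mult_right_mono)

lemma infectives_at_mult_tendsto:
  assumes k: "k \<in> {1..m}" and t: "0 \<le> t k" and f: "(\<lambda>nu. real (Ntot m N nu) * f nu) \<longlonglongrightarrow> L"
  shows "(\<lambda>nu. real (infectives_at t nu k) * f nu) \<longlonglongrightarrow> t k * \<pi> k * L"
proof -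
  have "(\<lambda>nu. real (nat \<lfloor>(t k * \<pi> k) * real (Ntot m N nu)\<rfloor>) / real (Ntot m N nu)) \<longlonglongrightarrow> t k * \<pi> k"
    using t pi_pos[OF k] by (intro tendsto_nat_floor_mult_div Ntot_tendsto) auto
  then have "(\<lambda>nu. real (infectives_at t nu k) / real (Ntot m N nu)) \<longlonglongrightarrow> t k * \<pi> k"
    using k by (simp add: infectives_at_def Ntil_def ac_simps)
  from tendsto_mult[OF this f] show ?thesis
    by (simp add: field_simps)
qed

abbreviation (input) mean :: "nat \<Rightarrow> nat \<Rightarrow> nat \<Rightarrow> real" where
  "mean nu k i \<equiv> prob_space.expectation (M nu) (V nu k 1 i)"

lemma first_infective_moments:
  fixes nu :: nat
  assumes k: "k \<in> {1..m}" and i: "i \<in> {1..m}"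
  defines "v \<equiv> prob_space.variance (M nu) (V nu k 1 i)"
  shows "(\<integral>\<omega>. 1 - V nu k 1 i \<omega> \<partial>M nu) = 1 - mean nu k i"
    and "(\<integral>\<omega>. (1 - V nu k 1 i \<omega>)\<^sup>2 \<partial>M nu) = 1 - (2 * mean nu k i - (mean nu k i)\<^sup>2 - v)"
    and "0 \<le> mean nu k i"
    and "0 \<le> 2 * mean nu k i - (mean nu k i)\<^sup>2 - v"
proof -
  interpret prob_space "M nu" using model by (rule epidemic_model_prob_space)
  note moments = unit_interval_moments[OF epidemic_model_V_measurable[OF model k order.refl i]
      epidemic_model_V_bounds[OF model k order.refl i]]
  show "(\<integral>\<omega>. 1 - V nu k 1 i \<omega> \<partial>M nu) = 1 - mean nu k i" "0 \<le> mean nu k i"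
    using moments(1,3) by simp_all
  show "(\<integral>\<omega>. (1 - V nu k 1 i \<omega>)\<^sup>2 \<partial>M nu) = 1 - (2 * mean nu k i - (mean nu k i)\<^sup>2 - v)"
    using moments(2) by (simp add: v_def power2_diff)
  then show "0 \<le> 2 * mean nu k i - (mean nu k i)\<^sup>2 - v"
    using moments(4) by simp
qed

lemma contact_prob_tendsto:
  assumes k: "k \<in> {1..m}" and i: "i \<in> {1..m}" and t: "0 \<le> t k"
  shows "\<And>nu. 0 \<le> 1 - (\<integral>\<omega>. 1 - V nu k 1 i \<omega> \<partial>M nu)"
    and "(\<lambda>nu. 1 - (\<integral>\<omega>. 1 - V nu k 1 i \<omega> \<partial>M nu)) \<longlonglongrightarrow> 0"
    and "(\<lambda>nu. infectives_at t nu k * (1 - (\<integral>\<omega>. 1 - V nu k 1 i \<omega> \<partial>M nu))) \<longlonglongrightarrow> t k * \<pi> k * \<mu> k i"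
  using first_infective_moments(1,3)[OF k i] tendsto_0_if_Ntot_mult_tendsto[OF mu_lim[OF k i]]
    infectives_at_mult_tendsto[of k t, OF k t mu_lim[OF k i]]
  by simp_all

lemma contact_either_prob_tendsto:
  assumes k: "k \<in> {1..m}" and i: "i \<in> {1..m}" and t: "0 \<le> t k"
  shows "\<And>nu. 0 \<le> 1 - (\<integral>\<omega>. (1 - V nu k 1 i \<omega>)\<^sup>2 \<partial>M nu)"
    and "(\<lambda>nu. 1 - (\<integral>\<omega>. (1 - V nu k 1 i \<omega>)\<^sup>2 \<partial>M nu)) \<longlonglongrightarrow> 0"
    and "(\<lambda>nu. infectives_at t nu k * (1 - (\<integral>\<omega>. (1 - V nu k 1 i \<omega>)\<^sup>2 \<partial>M nu)))
      \<longlonglongrightarrow> 2 * (t k * \<pi> k * \<mu> k i)"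
proof -
  define v where "v nu = prob_space.variance (M nu) (V nu k 1 i)" for nu
  note moments = first_infective_moments(2,4)[OF k i, folded v_def]
  show "0 \<le> 1 - (\<integral>\<omega>. (1 - V nu k 1 i \<omega>)\<^sup>2 \<partial>M nu)" for nu
    using moments[of nu] by linarith
  have mean: "(\<lambda>nu. mean nu k i) \<longlonglongrightarrow> 0" "(\<lambda>nu. infectives_at t nu k * mean nu k i) \<longlonglongrightarrow> t k * \<pi> k * \<mu> k i"
    using contact_prob_tendsto(2,3)[of k i t, OF k i t] first_infective_moments(1)[OF k i] by simp_all
  have var: "v \<longlonglongrightarrow> 0" "(\<lambda>nu. infectives_at t nu k * v nu) \<longlonglongrightarrow> 0"
    using tendsto_0_if_Ntot_mult_tendsto[OF var_lim[OF k i]]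
      infectives_at_mult_tendsto[of k t, OF k t var_lim[OF k i]]
    by (simp_all add: v_def[abs_def])
  have defect: "1 - (\<integral>\<omega>. (1 - V nu k 1 i \<omega>)\<^sup>2 \<partial>M nu) = 2 * mean nu k i - (mean nu k i)\<^sup>2 - v nu" for nu
    using moments(1)[of nu] by simp
  have "(\<lambda>nu. 2 * mean nu k i - (mean nu k i)\<^sup>2 - v nu) \<longlonglongrightarrow> 2 * 0 - 0\<^sup>2 - 0"
    by (intro tendsto_intros mean var)
  then show "(\<lambda>nu. 1 - (\<integral>\<omega>. (1 - V nu k 1 i \<omega>)\<^sup>2 \<partial>M nu)) \<longlonglongrightarrow> 0"
    unfolding defect by simp
  have "(\<lambda>nu. 2 * (infectives_at t nu k * mean nu k i) - (infectives_at t nu k * mean nu k i) * mean nu k i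
      - infectives_at t nu k * v nu) \<longlonglongrightarrow> 2 * (t k * \<pi> k * \<mu> k i) - (t k * \<pi> k * \<mu> k i) * 0 - 0"
    by (intro tendsto_intros mean var)
  then show "(\<lambda>nu. infectives_at t nu k * (1 - (\<integral>\<omega>. (1 - V nu k 1 i \<omega>)\<^sup>2 \<partial>M nu)))
      \<longlonglongrightarrow> 2 * (t k * \<pi> k * \<mu> k i)"
    unfolding defect by (simp add: algebra_simps power2_eq_square)
qed

lemma uncontacted_prob_tendsto:
  assumes i: "i \<in> {1..m}" and t: "\<And>k. k \<in> {1..m} \<Longrightarrow> 0 \<le> t k"
  shows "(\<lambda>nu. \<Prod>k\<in>{1..m}. (\<integral>\<omega>. 1 - V nu k 1 i \<omega> \<partial>M nu) ^ infectives_at t nu k)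
      \<longlonglongrightarrow> 1 - rfun m \<pi> \<mu> i t"
    and "(\<lambda>nu. (\<Prod>k\<in>{1..m}. (\<integral>\<omega>. (1 - V nu k 1 i \<omega>)\<^sup>2 \<partial>M nu) ^ infectives_at t nu k)
      - (\<Prod>k\<in>{1..m}. (\<integral>\<omega>. 1 - V nu k 1 i \<omega> \<partial>M nu) ^ infectives_at t nu k)\<^sup>2) \<longlonglongrightarrow> 0"
proof -
  define c where "c = (\<Sum>k\<in>{1..m}. t k * \<pi> k * \<mu> k i)"
  have miss: "(\<lambda>nu. \<Prod>k\<in>{1..m}. (\<integral>\<omega>. 1 - V nu k 1 i \<omega> \<partial>M nu) ^ infectives_at t nu k) \<longlonglongrightarrow> exp (- c)"
    using tendsto_prod_one_minus_power_exp[of "{1..m}" "\<lambda>k nu. 1 - (\<integral>\<omega>. 1 - V nu k 1 i \<omega> \<partial>M nu)"]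
      contact_prob_tendsto[of _ i t, OF _ i t] by (simp add: c_def)
  then show "(\<lambda>nu. \<Prod>k\<in>{1..m}. (\<integral>\<omega>. 1 - V nu k 1 i \<omega> \<partial>M nu) ^ infectives_at t nu k)
      \<longlonglongrightarrow> 1 - rfun m \<pi> \<mu> i t"
    by (simp add: rfun_def c_def)
  have "(\<lambda>nu. \<Prod>k\<in>{1..m}. (\<integral>\<omega>. (1 - V nu k 1 i \<omega>)\<^sup>2 \<partial>M nu) ^ infectives_at t nu k)
      \<longlonglongrightarrow> exp (- (2 * c))"
    using tendsto_prod_one_minus_power_exp[of "{1..m}" "\<lambda>k nu. 1 - (\<integral>\<omega>. (1 - V nu k 1 i \<omega>)\<^sup>2 \<partial>M nu)"]
      contact_either_prob_tendsto[of _ i t, OF _ i t] by (simp add: c_def sum_distrib_left)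
  moreover have "exp (- (2 * c)) = (exp (- c))\<^sup>2"
    by (simp add: exp_double[symmetric])
  ultimately show "(\<lambda>nu. (\<Prod>k\<in>{1..m}. (\<integral>\<omega>. (1 - V nu k 1 i \<omega>)\<^sup>2 \<partial>M nu) ^ infectives_at t nu k)
      - (\<Prod>k\<in>{1..m}. (\<integral>\<omega>. 1 - V nu k 1 i \<omega> \<partial>M nu) ^ infectives_at t nu k)\<^sup>2) \<longlonglongrightarrow> 0"
    using tendsto_diff[OF _ tendsto_power[OF miss, of 2]] by fastforce
qed

lemma deviation_event_subset:
  assumes i: "i \<in> {1..m}"
    and N_close: "\<bar>real (N nu i) / Ntil m N \<pi> nu i - 1\<bar> < \<delta> / 3"
    and q_close: "\<bar>(1 - q) - rfun m \<pi> \<mu> i t\<bar> < \<delta> / 3"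
  shows "{\<omega>\<in>space (M nu). \<delta> < deviation i nu t \<omega>}
    \<subseteq> {\<omega>\<in>space (M nu). \<delta> / 3 \<le> \<bar>contacted_count m N C nu i (infectives_at t nu) \<omega> / N nu i - (1 - q)\<bar>}"
proof safe
  fix \<omega> assume "\<omega> \<in> space (M nu)"
    and far: "\<delta> < deviation i nu t \<omega>"
  define x where "x = real (contacted_count m N C nu i (infectives_at t nu) \<omega>)"
  have x: "0 \<le> x" "x \<le> N nu i" and N: "0 < real (N nu i)"
    using contacted_count_le N_pos[OF i, of nu] by (auto simp: x_def)
  have "x / Ntil m N \<pi> nu i - x / N nu i = x / N nu i * (real (N nu i) / Ntil m N \<pi> nu i - 1)"
    using N Ntil_pos[OF i, of nu] by (simp add: field_simps)
  then have "\<bar>x / Ntil m N \<pi> nu i - x / N nu i\<bar> = x / N nu i * \<bar>real (N nu i) / Ntil m N \<pi> nu i - 1\<bar>"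
    using x by (simp add: abs_mult)
  also have "\<dots> \<le> 1 * \<bar>real (N nu i) / Ntil m N \<pi> nu i - 1\<bar>"
    using x N by (intro mult_right_mono) auto
  finally have "\<bar>x / Ntil m N \<pi> nu i - x / N nu i\<bar> < \<delta> / 3"
    using N_close by simp
  then show "\<delta> / 3 \<le> \<bar>contacted_count m N C nu i (infectives_at t nu) \<omega> / N nu i - (1 - q)\<bar>"
    using far q_close unfolding deviation_def Xcount_eq_contacted_count x_def[symmetric] by linarith
qed

lemma deviation_tendsto_0_in_prob:
  assumes i: "i \<in> {1..m}" and t: "\<And>k. k \<in> {1..m} \<Longrightarrow> 0 \<le> t k" and "0 < \<delta>"
  shows "(\<lambda>nu. measure (M nu) {\<omega>\<in>space (M nu). \<delta> < deviation i nu t \<omega>}) \<longlonglongrightarrow> 0"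
proof -
  define q where "q nu = (\<Prod>k\<in>{1..m}. (\<integral>\<omega>. 1 - V nu k 1 i \<omega> \<partial>M nu) ^ infectives_at t nu k)" for nu
  define q2 where "q2 nu = (\<Prod>k\<in>{1..m}. (\<integral>\<omega>. (1 - V nu k 1 i \<omega>)\<^sup>2 \<partial>M nu) ^ infectives_at t nu k)" for nu
  define bound where "bound nu = (1 / N nu i + (q2 nu - (q nu)\<^sup>2)) / (\<delta> / 3)\<^sup>2" for nu
  have "bound \<longlonglongrightarrow> (0 + 0) / (\<delta> / 3)\<^sup>2"
    unfolding bound_def q_def q2_def
    using \<open>0 < \<delta>\<close> by (intro tendsto_intros inverse_N_tendsto_0 i uncontacted_prob_tendsto(2) t) auto
  then have bound: "bound \<longlonglongrightarrow> 0" by simp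
  have "(\<lambda>nu. 1 - q nu) \<longlonglongrightarrow> 1 - (1 - rfun m \<pi> \<mu> i t)"
    unfolding q_def by (intro tendsto_intros uncontacted_prob_tendsto(1) i t)
  from tendstoD[OF this, of "\<delta> / 3"]
  have "\<forall>\<^sub>F nu in sequentially. \<bar>(1 - q nu) - rfun m \<pi> \<mu> i t\<bar> < \<delta> / 3"
    using \<open>0 < \<delta>\<close> by (simp add: dist_real_def)
  with tendstoD[OF N_div_Ntil_tendsto_1[OF i], of "\<delta> / 3"] \<open>0 < \<delta>\<close>
  have close: "\<forall>\<^sub>F nu in sequentially. \<bar>real (N nu i) / Ntil m N \<pi> nu i - 1\<bar> < \<delta> / 3
      \<and> \<bar>(1 - q nu) - rfun m \<pi> \<mu> i t\<bar> < \<delta> / 3"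
    by (simp add: eventually_conj dist_real_def)
  show ?thesis
  proof (rule tendsto_sandwich[OF _ _ tendsto_const bound])
    show "\<forall>\<^sub>F nu in sequentially. measure (M nu) {\<omega>\<in>space (M nu). \<delta> < deviation i nu t \<omega>} \<le> bound nu"
      using close
    proof eventually_elim
      case (elim nu)
      interpret prob_space "M nu" using model by (rule epidemic_model_prob_space)
      have [measurable]: "(\<lambda>\<omega>. real (contacted_count m N C nu i (infectives_at t nu) \<omega>)) \<in> borel_measurable (M nu)"
        by (rule contacted_count_measurable[OF model i])
      have "prob {\<omega>\<in>space (M nu). \<delta> < deviation i nu t \<omega>}
          \<le> prob {\<omega>\<in>space (M nu). \<delta> / 3 \<le> \<bar>contacted_count m N C nu i (infectives_at t nu) \<omega> / N nu i - (1 - q nu)\<bar>}"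
        using deviation_event_subset[OF i] elim by (intro finite_measure_mono) measurable
      also have "\<dots> \<le> bound nu"
        unfolding bound_def q_def q2_def using \<open>0 < \<delta>\<close>
        by (intro prob_contacted_count_deviation_le model i N_pos) auto
      finally show ?case .
    qed
  qed auto
qed

lemma rfun_mono_increment:
  assumes i: "i \<in> {1..m}" and t: "\<And>k. k \<in> {1..m} \<Longrightarrow> 0 \<le> t k"
    and le: "\<And>k. k \<in> {1..m} \<Longrightarrow> t k \<le> t' k"
  shows "rfun m \<pi> \<mu> i t \<le> rfun m \<pi> \<mu> i t'"
    and "rfun m \<pi> \<mu> i t' - rfun m \<pi> \<mu> i t \<le> (\<Sum>k\<in>{1..m}. (t' k - t k) * \<pi> k * \<mu> k i)"
proof -
  have weight: "0 \<le> \<pi> k * \<mu> k i" if "k \<in> {1..m}" for k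
    using pi_pos[OF that] mu_nonneg[OF that i] by simp
  define a where "a = (\<Sum>k\<in>{1..m}. t k * \<pi> k * \<mu> k i)"
  define b where "b = (\<Sum>k\<in>{1..m}. t' k * \<pi> k * \<mu> k i)"
  have "0 \<le> a" unfolding a_def using t weight by (intro sum_nonneg) (simp add: mult.assoc)
  moreover have "a \<le> b" unfolding a_def b_def using le weight
    by (intro sum_mono) (simp add: mult.assoc mult_right_mono)
  moreover have "b - a = (\<Sum>k\<in>{1..m}. (t' k - t k) * \<pi> k * \<mu> k i)"
    unfolding a_def b_def by (simp add: sum_subtractf[symmetric] algebra_simps)
  ultimately show "rfun m \<pi> \<mu> i t \<le> rfun m \<pi> \<mu> i t'"
    and "rfun m \<pi> \<mu> i t' - rfun m \<pi> \<mu> i t \<le> (\<Sum>k\<in>{1..m}. (t' k - t k) * \<pi> k * \<mu> k i)"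
    unfolding rfun_def a_def[symmetric] b_def[symmetric] using exp_minus_diff_le[of a b] by simp_all
qed

lemma Xcount_mono:
  assumes "\<And>k. k \<in> {1..m} \<Longrightarrow> t k \<le> t' k"
  shows "Xcount m N \<pi> C nu i t \<omega> \<le> Xcount m N \<pi> C nu i t' \<omega>"
proof -
  have "contacted_count m N C nu i (infectives_at t nu) \<omega> \<le> contacted_count m N C nu i (infectives_at t' nu) \<omega>"
    using assms by (intro contacted_count_mono infectives_at_mono)
  then show ?thesis by (simp add: Xcount_eq_contacted_count)
qed

lemma deviation_le_grid:
  assumes i: "i \<in> {1..m}" and "0 < h" and t: "t \<in> Dbox m s"
    and grid: "\<And>p. p \<in> PiE {1..m} (\<lambda>k. {0..nat \<lfloor>s k / h\<rfloor> + 1}) \<Longrightarrow> deviation i nu (\<lambda>k. h * p k) \<omega> \<le> e"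
  shows "deviation i nu t \<omega> \<le> e + h * (\<Sum>k\<in>{1..m}. \<pi> k * \<mu> k i)"
proof -
  define lo where "lo = (\<lambda>k\<in>{1..m}. nat \<lfloor>t k / h\<rfloor>)"
  define hi where "hi = (\<lambda>k\<in>{1..m}. nat \<lfloor>t k / h\<rfloor> + 1)"
  have t_bounds: "0 \<le> t k" "t k \<le> s k" if "k \<in> {1..m}" for k
    using t that by (auto simp: Dbox_def)
  have floor_le: "nat \<lfloor>t k / h\<rfloor> \<le> nat \<lfloor>s k / h\<rfloor>" if "k \<in> {1..m}" for k
    using t_bounds[OF that] \<open>0 < h\<close> by (intro nat_mono floor_mono divide_right_mono) auto
  have grid_lo: "lo \<in> PiE {1..m} (\<lambda>k. {0..nat \<lfloor>s k / h\<rfloor> + 1})"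
    unfolding lo_def restrict_PiE_iff using floor_le by (auto intro: le_SucI)
  have grid_hi: "hi \<in> PiE {1..m} (\<lambda>k. {0..nat \<lfloor>s k / h\<rfloor> + 1})"
    unfolding hi_def restrict_PiE_iff using floor_le by auto
  have lo_t: "h * lo k \<le> t k" and t_hi: "t k \<le> h * hi k" if "k \<in> {1..m}" for k
    using nat_floor_divide_bracket[OF \<open>0 < h\<close> t_bounds(1)[OF that]] that
    by (simp_all add: lo_def hi_def)
  let ?X = "\<lambda>u. Xcount m N \<pi> C nu i u \<omega> / Ntil m N \<pi> nu i" and ?r = "rfun m \<pi> \<mu> i"
  have "deviation i nu t \<omega>
      \<le> max (deviation i nu (\<lambda>k. h * lo k) \<omega>) (deviation i nu (\<lambda>k. h * hi k) \<omega>)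
        + (?r (\<lambda>k. h * hi k) - ?r (\<lambda>k. h * lo k))"
    unfolding deviation_def
  proof (rule abs_diff_le_between)
    show "?X (\<lambda>k. h * lo k) \<le> ?X t" "?X t \<le> ?X (\<lambda>k. h * hi k)"
      using Ntil_pos[OF i, of nu] lo_t t_hi by (auto intro!: divide_right_mono Xcount_mono)
    show "?r (\<lambda>k. h * lo k) \<le> ?r t" "?r t \<le> ?r (\<lambda>k. h * hi k)"
      using \<open>0 < h\<close> lo_t t_hi t_bounds by (auto intro!: rfun_mono_increment(1)[OF i])
  qed
  also have "\<dots> \<le> e + (\<Sum>k\<in>{1..m}. (h * hi k - h * lo k) * \<pi> k * \<mu> k i)"
    using grid[OF grid_lo] grid[OF grid_hi] \<open>0 < h\<close> lo_t t_hi t_bounds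
    by (intro add_mono rfun_mono_increment(2)[OF i]) (auto simp: lo_def hi_def)
  also have "(\<Sum>k\<in>{1..m}. (h * hi k - h * lo k) * \<pi> k * \<mu> k i) = h * (\<Sum>k\<in>{1..m}. \<pi> k * \<mu> k i)"
    by (simp add: lo_def hi_def sum_distrib_left algebra_simps)
  finally show ?thesis .
qed

text \<open>For fixed \<open>\<nu>\<close>, as \<open>t\<close> ranges over the box the counts take only finitely many values,
  so the uncountable union below is a finite one.\<close>

lemma sets_Collect_ex_Dbox:
  "{\<omega>\<in>space (M nu). \<exists>t\<in>Dbox m s. P t (\<lambda>i\<in>{1..m}. Xcount m N \<pi> C nu i t \<omega>)} \<in> sets (M nu)"
proof -
  define count where "count \<kappa> \<omega> = (\<lambda>i\<in>{1..m}. real (contacted_count m N C nu i \<kappa> \<omega>))" for \<kappa> \<omega>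
  have "{\<omega>\<in>space (M nu). \<exists>t\<in>Dbox m s. P t (count (infectives_at t nu) \<omega>)} \<in> sets (M nu)"
  proof (rule sets_Collect_bex_finite_range[where key = "\<lambda>t. infectives_at t nu" and \<Phi> = count])
    show "finite (PiE {1..m} (\<lambda>k. {0..infectives_at s nu k}))"
      and "finite (PiE {1..m} (\<lambda>i. real ` {0..N nu i}))"
      by (auto intro!: finite_PiE)
    show "infectives_at t nu \<in> PiE {1..m} (\<lambda>k. {0..infectives_at s nu k})" if "t \<in> Dbox m s" for t
      using that infectives_at_mono[of _ t s nu] by (auto simp: Dbox_def infectives_at_def)
    show "count \<kappa> \<omega> \<in> PiE {1..m} (\<lambda>i. real ` {0..N nu i})" for \<kappa> \<omega>
      using contacted_count_le by (auto simp: count_def intro!: imageI)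
    show "{\<omega>\<in>space (M nu). count \<kappa> \<omega> = x} \<in> sets (M nu)"
      if "x \<in> PiE {1..m} (\<lambda>i. real ` {0..N nu i})" for \<kappa> x
    proof -
      have [measurable]: "i \<in> {1..m} \<Longrightarrow> (\<lambda>\<omega>. real (contacted_count m N C nu i \<kappa> \<omega>)) \<in> borel_measurable (M nu)"
        for i by (rule contacted_count_measurable[OF model])
      have "{\<omega>\<in>space (M nu). count \<kappa> \<omega> = x}
          = {\<omega>\<in>space (M nu). \<forall>i\<in>{1..m}. real (contacted_count m N C nu i \<kappa> \<omega>) = x i}"
        using that by (auto simp: count_def PiE_def extensional_def fun_eq_iff)
      also have "\<dots> \<in> sets (M nu)"
        by (intro sets.sets_Collect_finite_All) auto
      finally show ?thesis .
    qed
  qed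
  then show ?thesis
    by (simp add: count_def Xcount_eq_contacted_count)
qed

lemma deviation_le:
  assumes i: "i \<in> {1..m}" and t: "t \<in> Dbox m s"
  shows "deviation i nu t \<omega> \<le> N nu i / Ntil m N \<pi> nu i + 1"
proof -
  have "0 \<le> (\<Sum>k\<in>{1..m}. t k * \<pi> k * \<mu> k i)"
    using t pi_pos mu_nonneg[OF _ i] by (intro sum_nonneg) (auto simp: Dbox_def less_imp_le)
  then have "0 \<le> rfun m \<pi> \<mu> i t" "rfun m \<pi> \<mu> i t \<le> 1"
    by (auto simp: rfun_def)
  moreover have "0 \<le> Xcount m N \<pi> C nu i t \<omega> / Ntil m N \<pi> nu i"
    and "Xcount m N \<pi> C nu i t \<omega> / Ntil m N \<pi> nu i \<le> N nu i / Ntil m N \<pi> nu i"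
    using Ntil_pos[OF i, of nu] contacted_count_le
    by (auto simp: Xcount_eq_contacted_count intro!: divide_right_mono)
  ultimately show ?thesis
    unfolding deviation_def by linarith
qed

lemma deviation_norm_le_sum: "deviation_norm nu t \<omega> \<le> (\<Sum>i\<in>{1..m}. deviation i nu t \<omega>)"
  using L2_set_le_sum_abs[of "\<lambda>i. Xcount m N \<pi> C nu i t \<omega> / Ntil m N \<pi> nu i - rfun m \<pi> \<mu> i t" "{1..m}"]
  by (simp add: deviation_norm_def deviation_def L2_set_def Ntil_def)

lemma bdd_above_deviation: "i \<in> {1..m} \<Longrightarrow> bdd_above ((\<lambda>t. deviation i nu t \<omega>) ` Dbox m s)"
  using deviation_le by (intro bdd_aboveI2[where M = "N nu i / Ntil m N \<pi> nu i + 1"])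

lemma bdd_above_deviation_norm: "bdd_above ((\<lambda>t. deviation_norm nu t \<omega>) ` Dbox m s)"
proof (rule bdd_aboveI2[where M = "\<Sum>i\<in>{1..m}. N nu i / Ntil m N \<pi> nu i + 1"])
  fix t assume "t \<in> Dbox m s"
  have "deviation_norm nu t \<omega> \<le> (\<Sum>i\<in>{1..m}. deviation i nu t \<omega>)"
    by (rule deviation_norm_le_sum)
  also have "\<dots> \<le> (\<Sum>i\<in>{1..m}. N nu i / Ntil m N \<pi> nu i + 1)"
    using \<open>t \<in> Dbox m s\<close> by (intro sum_mono deviation_le)
  finally show "deviation_norm nu t \<omega> \<le> (\<Sum>i\<in>{1..m}. N nu i / Ntil m N \<pi> nu i + 1)" .
qed

lemma deviation_norm_nonneg: "0 \<le> deviation_norm nu t \<omega>"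
  by (simp add: deviation_norm_def sum_nonneg)

context
  fixes s :: "nat \<Rightarrow> real"
  assumes s_nonneg: "\<And>k. k \<in> {1..m} \<Longrightarrow> 0 \<le> s k"
begin

lemma Dbox_nonempty: "Dbox m s \<noteq> {}"
  using s_nonneg by (auto simp: Dbox_def intro!: exI[of _ "\<lambda>_. 0"])

lemma less_abs_SUP_deviation_iff:
  "i \<in> {1..m} \<Longrightarrow>
    \<epsilon> < \<bar>SUP t\<in>Dbox m s. deviation i nu t \<omega>\<bar> \<longleftrightarrow> (\<exists>t\<in>Dbox m s. \<epsilon> < deviation i nu t \<omega>)"
  using less_abs_cSUP_iff[OF Dbox_nonempty bdd_above_deviation] by (simp add: deviation_def)

lemma less_abs_SUP_deviation_norm_iff:
  "\<epsilon> < \<bar>SUP t\<in>Dbox m s. deviation_norm nu t \<omega>\<bar> \<longleftrightarrow> (\<exists>t\<in>Dbox m s. \<epsilon> < deviation_norm nu t \<omega>)"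
  using less_abs_cSUP_iff[OF Dbox_nonempty bdd_above_deviation_norm deviation_norm_nonneg] .

lemma sup_deviation_sets:
  assumes i: "i \<in> {1..m}"
  shows "{\<omega>\<in>space (M nu). \<epsilon> < \<bar>SUP t\<in>Dbox m s. deviation i nu t \<omega>\<bar>} \<in> sets (M nu)"
proof -
  have "{\<omega>\<in>space (M nu). \<epsilon> < \<bar>SUP t\<in>Dbox m s. deviation i nu t \<omega>\<bar>}
      = {\<omega>\<in>space (M nu). \<exists>t\<in>Dbox m s. \<epsilon> < deviation i nu t \<omega>}"
    using less_abs_SUP_deviation_iff[OF i] by simp
  also have "\<dots> \<in> sets (M nu)"
    using sets_Collect_ex_Dbox[where s = s and nu = nu
        and P = "\<lambda>t x. \<epsilon> < \<bar>x i / Ntil m N \<pi> nu i - rfun m \<pi> \<mu> i t\<bar>"] i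
    by (simp add: deviation_def)
  finally show ?thesis .
qed

lemma sup_deviation_norm_sets:
  "{\<omega>\<in>space (M nu). \<epsilon> < \<bar>SUP t\<in>Dbox m s. deviation_norm nu t \<omega>\<bar>} \<in> sets (M nu)"
proof -
  have "{\<omega>\<in>space (M nu). \<epsilon> < \<bar>SUP t\<in>Dbox m s. deviation_norm nu t \<omega>\<bar>}
      = {\<omega>\<in>space (M nu). \<exists>t\<in>Dbox m s. \<epsilon> < deviation_norm nu t \<omega>}"
    using less_abs_SUP_deviation_norm_iff by simp
  also have "\<dots> \<in> sets (M nu)"
    using sets_Collect_ex_Dbox[where s = s and nu = nu and P = "\<lambda>t x. \<epsilon> <
        sqrt (\<Sum>i\<in>{1..m}. (x i / (real (Ntot m N nu) * \<pi> i) - rfun m \<pi> \<mu> i t)\<^sup>2)"]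
    by (simp add: deviation_norm_def)
  finally show ?thesis .
qed

lemma abs_sup_deviation_norm_le:
  "\<bar>SUP t\<in>Dbox m s. deviation_norm nu t \<omega>\<bar> \<le> (\<Sum>i\<in>{1..m}. \<bar>SUP t\<in>Dbox m s. deviation i nu t \<omega>\<bar>)"
proof -
  have "(SUP t\<in>Dbox m s. deviation_norm nu t \<omega>) \<le> (\<Sum>i\<in>{1..m}. SUP t\<in>Dbox m s. deviation i nu t \<omega>)"
  proof (rule cSUP_least[OF Dbox_nonempty])
    fix t assume "t \<in> Dbox m s"
    have "deviation_norm nu t \<omega> \<le> (\<Sum>i\<in>{1..m}. deviation i nu t \<omega>)"
      by (rule deviation_norm_le_sum)
    also have "\<dots> \<le> (\<Sum>i\<in>{1..m}. SUP t\<in>Dbox m s. deviation i nu t \<omega>)"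
      using \<open>t \<in> Dbox m s\<close> bdd_above_deviation by (intro sum_mono cSUP_upper)
    finally show "deviation_norm nu t \<omega> \<le> (\<Sum>i\<in>{1..m}. SUP t\<in>Dbox m s. deviation i nu t \<omega>)" .
  qed
  moreover have "0 \<le> (SUP t\<in>Dbox m s. deviation_norm nu t \<omega>)"
    using Dbox_nonempty bdd_above_deviation_norm deviation_norm_nonneg by (auto intro: cSUP_upper2)
  moreover have "0 \<le> (SUP t\<in>Dbox m s. deviation i nu t \<omega>)" if "i \<in> {1..m}" for i
    using Dbox_nonempty bdd_above_deviation[OF that] by (auto intro: cSUP_upper2 simp: deviation_def)
  ultimately show ?thesis by simp
qed

lemma sup_deviation_conv_prob_zero:
  assumes i: "i \<in> {1..m}"
  shows "conv_prob_zero M (\<lambda>nu \<omega>. SUP t\<in>Dbox m s. deviation i nu t \<omega>)"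
  unfolding conv_prob_zero_def
proof (intro allI impI conjI)
  show "{\<omega>\<in>space (M nu). \<epsilon> < \<bar>SUP t\<in>Dbox m s. deviation i nu t \<omega>\<bar>} \<in> sets (M nu)" for \<epsilon> nu
    using i by (rule sup_deviation_sets)
next
  fix \<epsilon> :: real assume "0 < \<epsilon>"
  define L where "L = (\<Sum>k\<in>{1..m}. \<pi> k * \<mu> k i)"
  define h where "h = \<epsilon> / (2 * L + 2)"
  have "0 \<le> L"
    unfolding L_def using pi_pos mu_nonneg[OF _ i] by (intro sum_nonneg) (simp add: less_imp_le)
  then have h: "0 < h" "h * L \<le> \<epsilon> / 2"
    using \<open>0 < \<epsilon>\<close> by (auto simp: h_def field_simps)
  define G where "G = PiE {1..m} (\<lambda>k. {0..nat \<lfloor>s k / h\<rfloor> + 1})"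
  show "(\<lambda>nu. measure (M nu) {\<omega>\<in>space (M nu). \<epsilon> < \<bar>SUP t\<in>Dbox m s. deviation i nu t \<omega>\<bar>}) \<longlonglongrightarrow> 0"
  proof (rule tendsto_measure_finite_cover[where I = G
        and E = "\<lambda>nu p. {\<omega>\<in>space (M nu). \<epsilon> / 2 < deviation i nu (\<lambda>k. h * p k) \<omega>}"])
    show "finite_measure (M nu)" for nu
      using epidemic_model_prob_space[OF model] by (rule prob_space.finite_measure)
    show "finite G" by (auto simp: G_def intro!: finite_PiE)
    show "{\<omega>\<in>space (M nu). \<epsilon> < \<bar>SUP t\<in>Dbox m s. deviation i nu t \<omega>\<bar>}
        \<subseteq> (\<Union>p\<in>G. {\<omega>\<in>space (M nu). \<epsilon> / 2 < deviation i nu (\<lambda>k. h * p k) \<omega>})" for nu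
    proof (rule subsetI, rule ccontr)
      fix \<omega> assume "\<omega> \<in> {\<omega>\<in>space (M nu). \<epsilon> < \<bar>SUP t\<in>Dbox m s. deviation i nu t \<omega>\<bar>}"
      then obtain t where t: "t \<in> Dbox m s" "\<epsilon> < deviation i nu t \<omega>" and "\<omega> \<in> space (M nu)"
        using less_abs_SUP_deviation_iff[OF i] by auto
      moreover assume "\<omega> \<notin> (\<Union>p\<in>G. {\<omega>\<in>space (M nu). \<epsilon> / 2 < deviation i nu (\<lambda>k. h * p k) \<omega>})"
      ultimately have "deviation i nu (\<lambda>k. h * p k) \<omega> \<le> \<epsilon> / 2" if "p \<in> G" for p
        using that by auto
      then have "deviation i nu t \<omega> \<le> \<epsilon> / 2 + h * L"
        unfolding L_def by (rule deviation_le_grid[OF i h(1) t(1)]) (simp add: G_def)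
      then show False using t h(2) by simp
    qed
    show "{\<omega>\<in>space (M nu). \<epsilon> / 2 < deviation i nu (\<lambda>k. h * p k) \<omega>} \<in> sets (M nu)"
      for nu and p :: "nat \<Rightarrow> nat"
      using i by measurable
    show "(\<lambda>nu. measure (M nu) {\<omega>\<in>space (M nu). \<epsilon> / 2 < deviation i nu (\<lambda>k. h * p k) \<omega>}) \<longlonglongrightarrow> 0"
      for p :: "nat \<Rightarrow> nat"
      using h(1) \<open>0 < \<epsilon>\<close> by (intro deviation_tendsto_0_in_prob i) auto
  qed
qed

lemma sup_deviation_norm_conv_prob_zero:
  "conv_prob_zero M (\<lambda>nu \<omega>. SUP t\<in>Dbox m s. deviation_norm nu t \<omega>)"
proof (rule conv_prob_zero_sum_bound[where I = "{1..m}"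
      and Z = "\<lambda>i nu \<omega>. SUP t\<in>Dbox m s. deviation i nu t \<omega>"])
  show "finite_measure (M nu)" for nu
    using epidemic_model_prob_space[OF model] by (rule prob_space.finite_measure)
  show "conv_prob_zero M (\<lambda>nu \<omega>. SUP t\<in>Dbox m s. deviation i nu t \<omega>)" if "i \<in> {1..m}" for i
    using that by (rule sup_deviation_conv_prob_zero)
  show "\<bar>SUP t\<in>Dbox m s. deviation_norm nu t \<omega>\<bar> \<le> (\<Sum>i\<in>{1..m}. \<bar>SUP t\<in>Dbox m s. deviation i nu t \<omega>\<bar>)"
    for nu \<omega>
    by (rule abs_sup_deviation_norm_le)
qed (auto intro: sup_deviation_norm_sets)

end

end

theorem lemma3p2:
  fixes m :: nat and N :: "nat \<Rightarrow> nat \<Rightarrow> nat" and \<pi> :: "nat \<Rightarrow> real"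
    and M :: "nat \<Rightarrow> 'a measure"
    and V :: "nat \<Rightarrow> nat \<Rightarrow> nat \<Rightarrow> nat \<Rightarrow> 'a \<Rightarrow> real"
    and C :: "nat \<Rightarrow> nat \<Rightarrow> nat \<Rightarrow> nat \<Rightarrow> nat \<Rightarrow> 'a \<Rightarrow> bool"
    and \<mu> :: "nat \<Rightarrow> nat \<Rightarrow> real" and s :: "nat \<Rightarrow> real"
  assumes m: "m \<ge> 1"
    and N_pos: "\<And>nu i. i \<in> {1..m} \<Longrightarrow> N nu i \<ge> 1"
    and pi_pos: "\<And>i. i \<in> {1..m} \<Longrightarrow> \<pi> i > 0"
    and model: "\<And>nu. epidemic_model m N (M nu) V C nu"
    and N_inf: "filterlim (\<lambda>nu. Ntot m N nu) at_top sequentially"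
    and pi_lim: "\<And>i. i \<in> {1..m} \<Longrightarrow> (\<lambda>nu. real (N nu i) / real (Ntot m N nu)) \<longlonglongrightarrow> \<pi> i"
    and mu_nonneg: "\<And>i k. i \<in> {1..m} \<Longrightarrow> k \<in> {1..m} \<Longrightarrow> \<mu> i k \<ge> 0"
    and mu_lim: "\<And>i k. i \<in> {1..m} \<Longrightarrow> k \<in> {1..m} \<Longrightarrow>
       (\<lambda>nu. real (Ntot m N nu) * prob_space.expectation (M nu) (V nu i 1 k)) \<longlonglongrightarrow> \<mu> i k"
    and var_lim: "\<And>i k. i \<in> {1..m} \<Longrightarrow> k \<in> {1..m} \<Longrightarrow>
       (\<lambda>nu. real (Ntot m N nu) * prob_space.variance (M nu) (V nu i 1 k)) \<longlonglongrightarrow> 0"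
    and s_nonneg: "\<And>k. k \<in> {1..m} \<Longrightarrow> s k \<ge> 0"
  shows "(\<forall>i\<in>{1..m}. conv_prob_zero M (\<lambda>nu \<omega>. SUP t\<in>Dbox m s.
            \<bar>Xcount m N \<pi> C nu i t \<omega> / Ntil m N \<pi> nu i - rfun m \<pi> \<mu> i t\<bar>))
       \<and> conv_prob_zero M (\<lambda>nu \<omega>. SUP t\<in>Dbox m s.
            sqrt (\<Sum>i\<in>{1..m}. (Xcount m N \<pi> C nu i t \<omega> / (real (Ntot m N nu) * \<pi> i)
                                - rfun m \<pi> \<mu> i t)\<^sup>2))"
proof -
  interpret epidemic_limit m N \<pi> M V C \<mu>
    using m N_pos pi_pos model N_inf pi_lim mu_nonneg mu_lim var_lim by unfold_locales
  have "conv_prob_zero M (\<lambda>nu \<omega>. SUP t\<in>Dbox m s. deviation i nu t \<omega>)" if "i \<in> {1..m}" for i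
    using sup_deviation_conv_prob_zero[where s = s, OF s_nonneg that] .
  moreover have "conv_prob_zero M (\<lambda>nu \<omega>. SUP t\<in>Dbox m s. deviation_norm nu t \<omega>)"
    using sup_deviation_norm_conv_prob_zero[where s = s, OF s_nonneg] .
  ultimately show ?thesis
    unfolding deviation_def deviation_norm_def by blast
qed

end
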